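(* Let $\mathcal{F}$ be a family of finite graded vertically indecomposable lattices (considered up to isomorphism) that is closed under vertical 2-sum. Let $f_{\mathrm{vi}}(n)$ and $f_{\mathrm{pc}}(n)$ be the numbers of $n$-element lattices in $\mathcal{F}$ and of $n$-element pieces in $\mathcal{F}$, respectively. Let $N \ge 6$ be an integer constant, and let $\underline{f} \colon \mathbb{N}^+ \to \mathbb{N}^+$ be defined by $\underline{f}(n) = f_{\mathrm{pc}}(n)$ for $1 \le n \le 6$, \[ \underline{f}(n) = f_{\mathrm{pc}}(n) + \sum_{k=6}^{n-1} f_{\mathrm{pc}}(k)\, \underline{f}(n-k+4) \quad \text{for } 7 \le n \le N, \] and \[ \underline{f}(n) = \sum_{k=6}^{N} f_{\mathrm{pc}}(k)\, \underline{f}(n-k+4) \quad \text{for } n \ge N+1. \] Then $f_{\mathrm{vi}}(n) \ge \underline{f}(n)$ for all $n \ge 1$.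
   Context: A knot of a lattice $X$ is an element distinct from top and bottom that is comparable to all elements; a lattice is vertically indecomposable if it has no knot. For a lattice $L$ with exactly two coatoms and a lattice $U$ with exactly two atoms, a vertical 2-sum $L +_2 U$ is the poset obtained by removing the top of $L$ and the bottom of $U$ and identifying the two coatoms of $L$ with the two atoms of $U$ via some bijection (with order generated by the orders of the two parts); it is a lattice with $|L|+|U|-4$ elements. "Closed under vertical 2-sum" means every vertical 2-sum of members of $\mathcal{F}$ (where defined) lies in $\mathcal{F}$. In a graded lattice $X$, two elements form a neck if (1) they have the same rank, (2) they are the only elements of $X$ of that rank, and (3) they are neither atoms nor coatoms. A piece is a graded vertically indecomposable lattice that has exactly two atoms, exactly two coatoms, no neck, and rank at least three. *)

theory Defs
  imports Main
begin

definition is_lattice :: "'a set \<Rightarrow> ('a \<Rightarrow> 'a \<Rightarrow> bool) \<Rightarrow> bool" where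
  "is_lattice A le \<longleftrightarrow> A \<noteq> {}
     \<and> (\<forall>x\<in>A. le x x)
     \<and> (\<forall>x\<in>A. \<forall>y\<in>A. le x y \<and> le y x \<longrightarrow> x = y)
     \<and> (\<forall>x\<in>A. \<forall>y\<in>A. \<forall>z\<in>A. le x y \<and> le y z \<longrightarrow> le x z)
     \<and> (\<forall>x\<in>A. \<forall>y\<in>A.
          (\<exists>s\<in>A. le x s \<and> le y s \<and> (\<forall>z\<in>A. le x z \<and> le y z \<longrightarrow> le s z))
        \<and> (\<exists>i\<in>A. le i x \<and> le i y \<and> (\<forall>z\<in>A. le z x \<and> le z y \<longrightarrow> le z i)))"

definition ptop :: "'a set \<Rightarrow> ('a \<Rightarrow> 'a \<Rightarrow> bool) \<Rightarrow> 'a" where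
  "ptop A le = (THE t. t \<in> A \<and> (\<forall>x\<in>A. le x t))"

definition pbot :: "'a set \<Rightarrow> ('a \<Rightarrow> 'a \<Rightarrow> bool) \<Rightarrow> 'a" where
  "pbot A le = (THE b. b \<in> A \<and> (\<forall>x\<in>A. le b x))"

definition covers :: "'a set \<Rightarrow> ('a \<Rightarrow> 'a \<Rightarrow> bool) \<Rightarrow> 'a \<Rightarrow> 'a \<Rightarrow> bool" where
  "covers A le x y \<longleftrightarrow> x \<in> A \<and> y \<in> A \<and> le x y \<and> x \<noteq> y
     \<and> (\<forall>z\<in>A. le x z \<and> le z y \<longrightarrow> z = x \<or> z = y)"

definition atoms :: "'a set \<Rightarrow> ('a \<Rightarrow> 'a \<Rightarrow> bool) \<Rightarrow> 'a set" where
  "atoms A le = {a. covers A le (pbot A le) a}"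

definition coatoms :: "'a set \<Rightarrow> ('a \<Rightarrow> 'a \<Rightarrow> bool) \<Rightarrow> 'a set" where
  "coatoms A le = {c. covers A le c (ptop A le)}"

definition rank_fun :: "'a set \<Rightarrow> ('a \<Rightarrow> 'a \<Rightarrow> bool) \<Rightarrow> ('a \<Rightarrow> nat) \<Rightarrow> bool" where
  "rank_fun A le \<rho> \<longleftrightarrow> \<rho> (pbot A le) = 0 \<and> (\<forall>x y. covers A le x y \<longrightarrow> \<rho> y = \<rho> x + 1)"

definition graded :: "'a set \<Rightarrow> ('a \<Rightarrow> 'a \<Rightarrow> bool) \<Rightarrow> bool" where
  "graded A le \<longleftrightarrow> (\<exists>\<rho>. rank_fun A le \<rho>)"

definition knot :: "'a set \<Rightarrow> ('a \<Rightarrow> 'a \<Rightarrow> bool) \<Rightarrow> 'a \<Rightarrow> bool" where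
  "knot A le x \<longleftrightarrow> x \<in> A \<and> x \<noteq> ptop A le \<and> x \<noteq> pbot A le \<and> (\<forall>y\<in>A. le x y \<or> le y x)"

definition vert_indec :: "'a set \<Rightarrow> ('a \<Rightarrow> 'a \<Rightarrow> bool) \<Rightarrow> bool" where
  "vert_indec A le \<longleftrightarrow> \<not> (\<exists>x. knot A le x)"

definition is_neck :: "'a set \<Rightarrow> ('a \<Rightarrow> 'a \<Rightarrow> bool) \<Rightarrow> ('a \<Rightarrow> nat) \<Rightarrow> 'a \<Rightarrow> 'a \<Rightarrow> bool" where
  "is_neck A le \<rho> a b \<longleftrightarrow> a \<in> A \<and> b \<in> A \<and> a \<noteq> b \<and> \<rho> a = \<rho> b
     \<and> {x\<in>A. \<rho> x = \<rho> a} = {a, b}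
     \<and> a \<notin> atoms A le \<and> a \<notin> coatoms A le \<and> b \<notin> atoms A le \<and> b \<notin> coatoms A le"

definition is_piece :: "'a set \<Rightarrow> ('a \<Rightarrow> 'a \<Rightarrow> bool) \<Rightarrow> bool" where
  "is_piece A le \<longleftrightarrow> is_lattice A le \<and> graded A le \<and> vert_indec A le
     \<and> card (atoms A le) = 2 \<and> card (coatoms A le) = 2
     \<and> (\<exists>\<rho>. rank_fun A le \<rho> \<and> \<rho> (ptop A le) \<ge> 3 \<and> \<not> (\<exists>a b. is_neck A le \<rho> a b))"

definition iso :: "'a set \<Rightarrow> ('a \<Rightarrow> 'a \<Rightarrow> bool) \<Rightarrow> 'b set \<Rightarrow> ('b \<Rightarrow> 'b \<Rightarrow> bool) \<Rightarrow> bool" where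
  "iso A le B le' \<longleftrightarrow> (\<exists>h. bij_betw h A B \<and> (\<forall>x\<in>A. \<forall>y\<in>A. le x y \<longleftrightarrow> le' (h x) (h y)))"

text \<open>Vertical 2-sum L +_2 U with identification \<phi> : coatoms L \<rightarrow> atoms U (a bijection).
  Elements of L minus its top are tagged Inl; elements of U minus its bottom and atoms are tagged Inr;
  an atom u of U is identified with the coatom (inverse of \<phi>) u of L.\<close>
definition vsum2 :: "'a set \<Rightarrow> ('a \<Rightarrow> 'a \<Rightarrow> bool) \<Rightarrow> 'a set \<Rightarrow> ('a \<Rightarrow> 'a \<Rightarrow> bool) \<Rightarrow> ('a \<Rightarrow> 'a)
     \<Rightarrow> ('a + 'a) set \<times> (('a + 'a) \<Rightarrow> ('a + 'a) \<Rightarrow> bool)" where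
  "vsum2 A le B le' \<phi> =
    (let g = (\<lambda>u. if u \<in> atoms B le' then Inl (inv_into (coatoms A le) \<phi> u) else Inr u);
         R1 = (\<lambda>x y. \<exists>a b. a \<in> A - {ptop A le} \<and> b \<in> A - {ptop A le} \<and> x = Inl a \<and> y = Inl b \<and> le a b);
         R2 = (\<lambda>x y. \<exists>u v. u \<in> B - {pbot B le'} \<and> v \<in> B - {pbot B le'} \<and> x = g u \<and> y = g v \<and> le' u v)
     in (Inl ` (A - {ptop A le}) \<union> Inr ` (B - {pbot B le'} - atoms B le'),
         tranclp (\<lambda>x y. R1 x y \<or> R2 x y)))"

definition closed_vsum2 :: "(nat set \<times> (nat \<Rightarrow> nat \<Rightarrow> bool)) set \<Rightarrow> bool" where
  "closed_vsum2 F \<longleftrightarrow> (\<forall>A le B le' \<phi>. (A, le) \<in> F \<longrightarrow> (B, le') \<in> F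
      \<longrightarrow> card (coatoms A le) = 2 \<longrightarrow> card (atoms B le') = 2
      \<longrightarrow> bij_betw \<phi> (coatoms A le) (atoms B le')
      \<longrightarrow> (\<exists>C lc. (C, lc) \<in> F \<and> iso C lc (fst (vsum2 A le B le' \<phi>)) (snd (vsum2 A le B le' \<phi>))))"

definition num_classes :: "('a set \<times> ('a \<Rightarrow> 'a \<Rightarrow> bool)) set \<Rightarrow> nat" where
  "num_classes S = card ((\<lambda>(A, le). {(B, le'). (B, le') \<in> S \<and> iso B le' A le}) ` S)"

definition f_vi :: "(nat set \<times> (nat \<Rightarrow> nat \<Rightarrow> bool)) set \<Rightarrow> nat \<Rightarrow> nat" where
  "f_vi F n = num_classes {(A, le). (A, le) \<in> F \<and> card A = n}"

definition f_pc :: "(nat set \<times> (nat \<Rightarrow> nat \<Rightarrow> bool)) set \<Rightarrow> nat \<Rightarrow> nat" where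
  "f_pc F n = num_classes {(A, le). (A, le) \<in> F \<and> card A = n \<and> is_piece A le}"

function lowf :: "(nat \<Rightarrow> nat) \<Rightarrow> nat \<Rightarrow> nat \<Rightarrow> nat" where
  "lowf p N n =
    (if n \<le> 6 then p n
     else if n \<le> N then p n + (\<Sum>k = 6..n - 1. p k * lowf p N (n - k + 4))
     else (\<Sum>k = 6..N. p k * lowf p N (n - k + 4)))"
  by pat_completeness auto
termination
  by (relation "measure (\<lambda>(p, N, n). n)") auto

end

(* A piece P with k elements and a member X of F with two atoms, two coatoms and rank at least 3
   glue to P +_2 X, a member of F of the same kind with k + |X| - 4 elements. Such a sum has a neck
   at the middle level, where the coatoms of P are identified with the atoms of X, so it is not a
   piece; and as P has no neck, the sum has no neck below the middle level. An isomorphism between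
   two such sums preserves ranks and maps necks to necks, so it matches their middle levels and
   restricts to isomorphisms of the lower and of the upper summands. Hence non-isomorphic pairs
   (P, X) give non-isomorphic sums, and by induction on n the pieces of size n together with these
   sums provide lowf n pairwise non-isomorphic members of F of size n. *)

theory Submission
  imports Defs
begin

section \<open>Posets, covers and rank functions\<close>

definition poset :: "'a set \<Rightarrow> ('a \<Rightarrow> 'a \<Rightarrow> bool) \<Rightarrow> bool" where
  "poset A le \<longleftrightarrow> (\<forall>x\<in>A. le x x) \<and> (\<forall>x\<in>A. \<forall>y\<in>A. le x y \<and> le y x \<longrightarrow> x = y)
     \<and> (\<forall>x\<in>A. \<forall>y\<in>A. \<forall>z\<in>A. le x y \<and> le y z \<longrightarrow> le x z)"

lemma poset_refl: "poset A le \<Longrightarrow> x \<in> A \<Longrightarrow> le x x"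
  unfolding poset_def by blast

lemma poset_antisym: "poset A le \<Longrightarrow> x \<in> A \<Longrightarrow> y \<in> A \<Longrightarrow> le x y \<Longrightarrow> le y x \<Longrightarrow> x = y"
  unfolding poset_def by blast

lemma poset_trans: "poset A le \<Longrightarrow> x \<in> A \<Longrightarrow> y \<in> A \<Longrightarrow> z \<in> A \<Longrightarrow> le x y \<Longrightarrow> le y z \<Longrightarrow> le x z"
  unfolding poset_def by blast

lemma poset_conversep [simp]: "poset A le\<inverse>\<inverse> \<longleftrightarrow> poset A le"
  unfolding poset_def conversep_iff by blast

lemma is_lattice_poset: "is_lattice A le \<Longrightarrow> poset A le"
  unfolding is_lattice_def poset_def by (elim conjE) (intro conjI; assumption)

lemma is_lattice_conversep [simp]: "is_lattice A le\<inverse>\<inverse> \<longleftrightarrow> is_lattice A le"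
  unfolding is_lattice_def conversep_iff by blast

lemma is_lattice_upper_bound:
  assumes "is_lattice A le" "x \<in> A" "y \<in> A"
  shows "\<exists>s\<in>A. le x s \<and> le y s"
proof -
  have "\<forall>x\<in>A. \<forall>y\<in>A. \<exists>s\<in>A. le x s \<and> le y s"
    using assms(1) unfolding is_lattice_def by (elim conjE) blast
  with assms(2,3) show ?thesis by blast
qed

lemma pbot_conversep: "pbot A le = ptop A le\<inverse>\<inverse>"
  unfolding pbot_def ptop_def by simp

lemma covers_conversep [simp]: "covers A le\<inverse>\<inverse> x y \<longleftrightarrow> covers A le y x"
  unfolding covers_def conversep_iff by blast

lemma atoms_conversep: "atoms A le = coatoms A le\<inverse>\<inverse>"
  unfolding atoms_def coatoms_def pbot_conversep by simp

lemma covers_mem: "covers A le x y \<Longrightarrow> x \<in> A \<and> y \<in> A \<and> le x y \<and> x \<noteq> y"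
  unfolding covers_def by auto

lemma atoms_subset: "atoms A le \<subseteq> A" and coatoms_subset: "coatoms A le \<subseteq> A"
  unfolding atoms_def coatoms_def covers_def by auto

lemma finite_poset_has_maximal:
  assumes "finite T" "T \<noteq> {}" "T \<subseteq> A" "poset A le"
  shows "\<exists>m\<in>T. \<forall>t\<in>T. le m t \<longrightarrow> t = m"
  using assms
proof (induction T rule: finite_ne_induct)
  case (singleton x)
  then show ?case by auto
next
  case (insert x T)
  then obtain m where m: "m \<in> T" "\<forall>t\<in>T. le m t \<longrightarrow> t = m"
    by auto
  show ?case
  proof (cases "le m x")
    case True
    have "t = x" if "t \<in> insert x T" "le x t" for t
    proof (cases "t = x")
      case False
      with that have "t \<in> T" "le m t"
        using poset_trans[of A le m x t] True insert.prems m(1) by auto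
      with m have "t = m" by blast
      then show ?thesis
        using poset_antisym[of A le x m] True \<open>le x t\<close> insert.prems m(1) by auto
    qed
    then show ?thesis by blast
  next
    case False
    then show ?thesis using m by auto
  qed
qed

lemma ptop_eqI: "poset A le \<Longrightarrow> t \<in> A \<Longrightarrow> \<forall>x\<in>A. le x t \<Longrightarrow> ptop A le = t"
  unfolding ptop_def by (rule the_equality) (auto dest: poset_antisym)

lemma pbot_eqI: "poset A le \<Longrightarrow> b \<in> A \<Longrightarrow> \<forall>x\<in>A. le b x \<Longrightarrow> pbot A le = b"
  using ptop_eqI[of A "le\<inverse>\<inverse>"] by (simp add: pbot_conversep)

lemma finite_lattice_ptop:
  assumes "finite A" "is_lattice A le"
  shows "ptop A le \<in> A" "\<And>x. x \<in> A \<Longrightarrow> le x (ptop A le)"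
proof -
  have po: "poset A le" using assms(2) by (rule is_lattice_poset)
  have "A \<noteq> {}" using assms(2) unfolding is_lattice_def by (elim conjE)
  then obtain m where m: "m \<in> A" "\<forall>t\<in>A. le m t \<longrightarrow> t = m"
    using finite_poset_has_maximal[OF assms(1) _ _ po] by blast
  have "le x m" if "x \<in> A" for x
  proof -
    obtain s where "s \<in> A" "le x s" "le m s"
      using is_lattice_upper_bound[OF assms(2) \<open>x \<in> A\<close> m(1)] by blast
    with m show ?thesis by auto
  qed
  then have "ptop A le = m" using ptop_eqI[OF po m(1)] by blast
  then show "ptop A le \<in> A" "\<And>x. x \<in> A \<Longrightarrow> le x (ptop A le)"
    using m(1) \<open>\<And>x. x \<in> A \<Longrightarrow> le x m\<close> by auto
qed

lemma finite_lattice_pbot: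
  assumes "finite A" "is_lattice A le"
  shows "pbot A le \<in> A" "\<And>x. x \<in> A \<Longrightarrow> le (pbot A le) x"
  using finite_lattice_ptop[of A "le\<inverse>\<inverse>"] assms by (simp_all add: pbot_conversep)

lemma exists_cover_below:
  assumes "finite A" "poset A le" "x \<in> A" "y \<in> A" "le x y" "x \<noteq> y"
  shows "\<exists>z\<in>A. covers A le z y \<and> le x z"
proof -
  define T where "T = {z\<in>A. le x z \<and> le z y \<and> z \<noteq> y}"
  have "x \<in> T" "finite T" "T \<subseteq> A"
    using assms poset_refl unfolding T_def by fastforce+
  then obtain m where m: "m \<in> T" "\<forall>t\<in>T. le m t \<longrightarrow> t = m"
    using finite_poset_has_maximal[OF _ _ _ assms(2)] by blast
  then have mA: "m \<in> A" "le x m" "le m y" "m \<noteq> y" unfolding T_def by auto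
  have "z = m \<or> z = y" if "z \<in> A" "le m z" "le z y" for z
  proof (cases "z = y")
    case False
    have "le x z" using poset_trans[OF assms(2) assms(3) mA(1) that(1)] mA that by blast
    with that False m show ?thesis unfolding T_def by blast
  qed simp
  then have "covers A le m y" unfolding covers_def using mA assms(4) by blast
  then show ?thesis using mA by blast
qed

lemma exists_cover_above:
  assumes "finite A" "poset A le" "x \<in> A" "y \<in> A" "le x y" "x \<noteq> y"
  shows "\<exists>z\<in>A. covers A le x z \<and> le z y"
  using exists_cover_below[of A "le\<inverse>\<inverse>" y x] assms by auto

lemma covers_downset_card_less:
  assumes "finite A" "poset A le" "covers A le z y"
  shows "card {w\<in>A. le w z} < card {w\<in>A. le w y}"
proof (rule psubset_card_mono)
  have z: "z \<in> A" "y \<in> A" "le z y" "z \<noteq> y" using covers_mem[OF assms(3)] by auto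
  show "{w\<in>A. le w z} \<subset> {w\<in>A. le w y}"
  proof
    show "{w\<in>A. le w z} \<subseteq> {w\<in>A. le w y}" using poset_trans[OF assms(2)] z by blast
    have "y \<notin> {w\<in>A. le w z}" using poset_antisym[OF assms(2)] z by blast
    then show "{w\<in>A. le w z} \<noteq> {w\<in>A. le w y}" using poset_refl[OF assms(2)] z by blast
  qed
qed (use assms(1) in simp)

lemma rank_fun_strict_mono:
  assumes "finite A" "poset A le" "rank_fun A le \<rho>"
  shows "x \<in> A \<Longrightarrow> y \<in> A \<Longrightarrow> le x y \<Longrightarrow> x \<noteq> y \<Longrightarrow> \<rho> x < \<rho> y"
proof (induction "card {w\<in>A. le w y}" arbitrary: y rule: less_induct)
  case less
  obtain z where z: "z \<in> A" "covers A le z y" "le x z"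
    using exists_cover_below[OF assms(1,2) less.prems] by blast
  have "\<rho> y = \<rho> z + 1" using assms(3) z(2) unfolding rank_fun_def by blast
  moreover have "x = z \<or> \<rho> x < \<rho> z"
    using less.hyps[OF covers_downset_card_less[OF assms(1,2) z(2)] less.prems(1) z(1,3)] by blast
  ultimately show ?case by auto
qed

lemma rank_fun_unique:
  assumes "finite A" "poset A le" "b \<in> A" "\<forall>x\<in>A. le b x"
    and "rank_fun A le \<rho>" "rank_fun A le \<rho>'"
  shows "x \<in> A \<Longrightarrow> \<rho> x = \<rho>' x"
proof (induction "card {w\<in>A. le w x}" arbitrary: x rule: less_induct)
  case less
  have "pbot A le = b" using pbot_eqI[OF assms(2,3,4)] .
  show ?case
  proof (cases "x = b")
    case True
    then show ?thesis using assms(5,6) \<open>pbot A le = b\<close> unfolding rank_fun_def by auto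
  next
    case False
    then obtain z where z: "z \<in> A" "covers A le z x"
      using exists_cover_below[OF assms(1,2,3) less.prems] assms(4) less.prems by blast
    from less.hyps[OF covers_downset_card_less[OF assms(1,2) z(2)] z(1)] z(2) assms(5,6)
    show ?thesis unfolding rank_fun_def by auto
  qed
qed

lemma rank_fun_pbot: "rank_fun A le \<rho> \<Longrightarrow> \<rho> (pbot A le) = 0"
  unfolding rank_fun_def by blast

lemma rank_fun_covers: "rank_fun A le \<rho> \<Longrightarrow> covers A le x y \<Longrightarrow> \<rho> y = \<rho> x + 1"
  unfolding rank_fun_def by blast

context
  fixes A :: "'a set" and le :: "'a \<Rightarrow> 'a \<Rightarrow> bool" and \<rho> :: "'a \<Rightarrow> nat"
  assumes fin: "finite A" and lat: "is_lattice A le" and rk: "rank_fun A le \<rho>"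
begin

lemma rank_less_ptop: "a \<in> A \<Longrightarrow> a \<noteq> ptop A le \<Longrightarrow> \<rho> a < \<rho> (ptop A le)"
  using rank_fun_strict_mono[OF fin is_lattice_poset[OF lat] rk] finite_lattice_ptop[OF fin lat]
  by blast

lemma rank_pos: "a \<in> A \<Longrightarrow> a \<noteq> pbot A le \<Longrightarrow> 0 < \<rho> a"
  using rank_fun_strict_mono[OF fin is_lattice_poset[OF lat] rk] finite_lattice_pbot[OF fin lat]
    rank_fun_pbot[OF rk] by fastforce

lemma coatoms_rank_iff: "c \<in> coatoms A le \<longleftrightarrow> c \<in> A \<and> \<rho> c + 1 = \<rho> (ptop A le)"
proof
  assume "c \<in> coatoms A le"
  then have "covers A le c (ptop A le)" unfolding coatoms_def by blast
  then show "c \<in> A \<and> \<rho> c + 1 = \<rho> (ptop A le)"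
    using covers_mem rank_fun_covers[OF rk] by fastforce
next
  assume c: "c \<in> A \<and> \<rho> c + 1 = \<rho> (ptop A le)"
  then have "c \<noteq> ptop A le" by auto
  have "z = c \<or> z = ptop A le" if "z \<in> A" "le c z" "le z (ptop A le)" for z
    using rank_fun_strict_mono[OF fin is_lattice_poset[OF lat] rk] finite_lattice_ptop[OF fin lat] that c
    by (metis Suc_eq_plus1 not_less_eq)
  then show "c \<in> coatoms A le"
    using c \<open>c \<noteq> ptop A le\<close> finite_lattice_ptop[OF fin lat] unfolding coatoms_def covers_def by blast
qed

lemma atoms_rank_iff: "a \<in> atoms A le \<longleftrightarrow> a \<in> A \<and> \<rho> a = 1"
proof
  assume "a \<in> atoms A le"
  then have "covers A le (pbot A le) a" unfolding atoms_def by blast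
  then show "a \<in> A \<and> \<rho> a = 1"
    using covers_mem rank_fun_covers[OF rk] rank_fun_pbot[OF rk] by fastforce
next
  assume a: "a \<in> A \<and> \<rho> a = 1"
  then have "a \<noteq> pbot A le" using rank_fun_pbot[OF rk] by auto
  have "z = pbot A le \<or> z = a" if "z \<in> A" "le (pbot A le) z" "le z a" for z
    using rank_fun_strict_mono[OF fin is_lattice_poset[OF lat] rk] rank_pos that a
    by (metis less_one not_less_iff_gr_or_eq)
  then show "a \<in> atoms A le"
    using a \<open>a \<noteq> pbot A le\<close> finite_lattice_pbot[OF fin lat] unfolding atoms_def covers_def by blast
qed

end

section \<open>Order isomorphisms\<close>

definition bounded_poset :: "'a set \<Rightarrow> ('a \<Rightarrow> 'a \<Rightarrow> bool) \<Rightarrow> bool" where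
  "bounded_poset A le \<longleftrightarrow> poset A le \<and> (\<exists>b\<in>A. \<forall>x\<in>A. le b x) \<and> (\<exists>t\<in>A. \<forall>x\<in>A. le x t)"

lemma bounded_poset_conversep [simp]: "bounded_poset A le\<inverse>\<inverse> \<longleftrightarrow> bounded_poset A le"
  unfolding bounded_poset_def by auto

lemma bounded_poset_poset: "bounded_poset A le \<Longrightarrow> poset A le"
  unfolding bounded_poset_def by blast

lemma bounded_posetI: "poset A le \<Longrightarrow> b \<in> A \<Longrightarrow> \<forall>x\<in>A. le b x \<Longrightarrow> t \<in> A \<Longrightarrow> \<forall>x\<in>A. le x t
  \<Longrightarrow> bounded_poset A le"
  unfolding bounded_poset_def by blast

lemma bounded_poset_ptop:
  assumes "bounded_poset A le"
  shows "ptop A le \<in> A" "\<And>x. x \<in> A \<Longrightarrow> le x (ptop A le)"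
proof -
  obtain t where "t \<in> A" "\<forall>x\<in>A. le x t" using assms unfolding bounded_poset_def by blast
  moreover have "ptop A le = t"
    using ptop_eqI[OF bounded_poset_poset[OF assms]] calculation by blast
  ultimately show "ptop A le \<in> A" "\<And>x. x \<in> A \<Longrightarrow> le x (ptop A le)" by auto
qed

lemma bounded_poset_pbot:
  assumes "bounded_poset A le"
  shows "pbot A le \<in> A" "\<And>x. x \<in> A \<Longrightarrow> le (pbot A le) x"
  using bounded_poset_ptop[of A "le\<inverse>\<inverse>"] assms by (simp_all add: pbot_conversep)

lemma finite_lattice_bounded_poset: "finite A \<Longrightarrow> is_lattice A le \<Longrightarrow> bounded_poset A le"
  using finite_lattice_ptop finite_lattice_pbot is_lattice_poset by (metis bounded_posetI)

definition order_iso :: "('a \<Rightarrow> 'b) \<Rightarrow> 'a set \<Rightarrow> ('a \<Rightarrow> 'a \<Rightarrow> bool) \<Rightarrow> 'b set \<Rightarrow> ('b \<Rightarrow> 'b \<Rightarrow> bool) \<Rightarrow> bool" where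
  "order_iso h A le B le' \<longleftrightarrow> bij_betw h A B \<and> (\<forall>x\<in>A. \<forall>y\<in>A. le x y \<longleftrightarrow> le' (h x) (h y))"

lemma iso_iff_order_iso: "iso A le B le' \<longleftrightarrow> (\<exists>h. order_iso h A le B le')"
  unfolding iso_def order_iso_def by auto

lemma order_iso_mem: "order_iso h A le B le' \<Longrightarrow> x \<in> A \<Longrightarrow> h x \<in> B"
  unfolding order_iso_def by (auto dest: bij_betwE)

lemma order_iso_image: "order_iso h A le B le' \<Longrightarrow> h ` A = B"
  unfolding order_iso_def bij_betw_def by auto

lemma order_iso_inj: "order_iso h A le B le' \<Longrightarrow> inj_on h A"
  unfolding order_iso_def bij_betw_def by auto

lemma order_iso_le: "order_iso h A le B le' \<Longrightarrow> x \<in> A \<Longrightarrow> y \<in> A \<Longrightarrow> le x y \<longleftrightarrow> le' (h x) (h y)"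
  unfolding order_iso_def by auto

lemma order_iso_card: "order_iso h A le B le' \<Longrightarrow> card A = card B"
  unfolding order_iso_def using bij_betw_same_card by blast

lemma order_iso_conversep [simp]: "order_iso h A le\<inverse>\<inverse> B le'\<inverse>\<inverse> \<longleftrightarrow> order_iso h A le B le'"
  unfolding order_iso_def by auto

lemma order_iso_inv:
  assumes "order_iso h A le B le'"
  shows "order_iso (inv_into A h) B le' A le"
proof -
  have b: "bij_betw h A B" using assms unfolding order_iso_def by blast
  have "le' x y \<longleftrightarrow> le (inv_into A h x) (inv_into A h y)" if "x \<in> B" "y \<in> B" for x y
    using order_iso_le[OF assms, of "inv_into A h x" "inv_into A h y"] that b
    by (simp add: bij_betw_def f_inv_into_f inv_into_into)
  then show ?thesis using bij_betw_inv_into[OF b] unfolding order_iso_def by blast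
qed

lemma order_iso_comp:
  "order_iso h A le B le' \<Longrightarrow> order_iso k B le' C lc \<Longrightarrow> order_iso (k \<circ> h) A le C lc"
  unfolding order_iso_def by (auto intro: bij_betw_trans dest: bij_betwE)

lemma iso_refl: "iso A le A le"
  unfolding iso_def by (rule exI[of _ id]) auto

lemma iso_sym: "iso A le B le' \<Longrightarrow> iso B le' A le"
  using order_iso_inv iso_iff_order_iso by metis

lemma iso_trans: "iso A le B le' \<Longrightarrow> iso B le' C lc \<Longrightarrow> iso A le C lc"
  using order_iso_comp iso_iff_order_iso by metis

lemma iso_card: "iso A le B le' \<Longrightarrow> card A = card B"
  using order_iso_card iso_iff_order_iso by metis

context
  fixes h :: "'a \<Rightarrow> 'b" and A le B le'
  assumes h: "order_iso h A le B le'" and bounded: "bounded_poset A le"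
begin

lemma order_iso_bounded_poset: "bounded_poset B le'"
proof -
  have po: "poset A le" using bounded by (rule bounded_poset_poset)
  have surj: "\<exists>x\<in>A. y = h x" if "y \<in> B" for y using order_iso_image[OF h] that by blast
  have "poset B le'"
    unfolding poset_def
    using surj order_iso_le[OF h] order_iso_inj[OF h] poset_refl[OF po] poset_antisym[OF po]
      poset_trans[OF po]
    by (smt (verit, best) inj_onD)
  moreover have "h (pbot A le) \<in> B" "\<forall>y\<in>B. le' (h (pbot A le)) y"
    using surj order_iso_le[OF h] order_iso_mem[OF h] bounded_poset_pbot[OF bounded] by metis+
  moreover have "h (ptop A le) \<in> B" "\<forall>y\<in>B. le' y (h (ptop A le))"
    using surj order_iso_le[OF h] order_iso_mem[OF h] bounded_poset_ptop[OF bounded] by metis+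
  ultimately show ?thesis by (blast intro: bounded_posetI)
qed

lemma order_iso_ptop: "ptop B le' = h (ptop A le)"
proof (rule ptop_eqI)
  show "poset B le'" using order_iso_bounded_poset by (rule bounded_poset_poset)
  show "h (ptop A le) \<in> B" using order_iso_mem[OF h] bounded_poset_ptop(1)[OF bounded] .
  show "\<forall>y\<in>B. le' y (h (ptop A le))"
    using order_iso_image[OF h] order_iso_le[OF h] bounded_poset_ptop[OF bounded] by blast
qed

end

lemma order_iso_pbot:
  "order_iso h A le B le' \<Longrightarrow> bounded_poset A le \<Longrightarrow> pbot B le' = h (pbot A le)"
  using order_iso_ptop[of h A "le\<inverse>\<inverse>" B "le'\<inverse>\<inverse>"] by (simp add: pbot_conversep)

context
  fixes h :: "'a \<Rightarrow> 'b" and A le B le'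
  assumes h: "order_iso h A le B le'" and bounded: "bounded_poset A le"
begin

lemma order_iso_covers:
  assumes "x \<in> A" "y \<in> A"
  shows "covers B le' (h x) (h y) \<longleftrightarrow> covers A le x y"
proof -
  have "(\<forall>z\<in>B. le' (h x) z \<and> le' z (h y) \<longrightarrow> z = h x \<or> z = h y)
      \<longleftrightarrow> (\<forall>z\<in>A. le x z \<and> le z y \<longrightarrow> z = x \<or> z = y)"
    using order_iso_image[OF h] order_iso_le[OF h] order_iso_inj[OF h] assms
    by (auto dest: inj_onD)
  then show ?thesis
    unfolding covers_def using order_iso_mem[OF h] order_iso_le[OF h] order_iso_inj[OF h] assms
    by (auto dest: inj_onD)
qed

lemma order_iso_coatoms: "coatoms B le' = h ` coatoms A le"
proof -
  have t: "ptop A le \<in> A" using bounded_poset_ptop[OF bounded] by blast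
  have "coatoms B le' = {c \<in> B. covers B le' c (h (ptop A le))}"
    unfolding coatoms_def order_iso_ptop[OF h bounded] by (auto dest: covers_mem)
  also have "\<dots> = h ` {c \<in> A. covers A le c (ptop A le)}"
    using order_iso_covers[OF _ t] order_iso_image[OF h] by blast
  also have "\<dots> = h ` coatoms A le"
    unfolding coatoms_def using covers_mem by metis
  finally show ?thesis .
qed

lemma order_iso_rank_fun: "rank_fun B le' \<rho> \<Longrightarrow> rank_fun A le (\<rho> \<circ> h)"
  unfolding rank_fun_def
proof (intro conjI allI impI)
  assume rk: "\<rho> (pbot B le') = 0 \<and> (\<forall>x y. covers B le' x y \<longrightarrow> \<rho> y = \<rho> x + 1)"
  have "pbot B le' = h (pbot A le)" using order_iso_pbot[OF h bounded] .
  then show "(\<rho> \<circ> h) (pbot A le) = 0" using rk by simp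
  fix x y assume "covers A le x y"
  then show "(\<rho> \<circ> h) y = (\<rho> \<circ> h) x + 1" using rk order_iso_covers covers_mem by fastforce
qed

end

lemma order_iso_atoms:
  "order_iso h A le B le' \<Longrightarrow> bounded_poset A le \<Longrightarrow> atoms B le' = h ` atoms A le"
  using order_iso_coatoms[of h A "le\<inverse>\<inverse>" B "le'\<inverse>\<inverse>"] by (simp add: atoms_conversep)

lemma is_neck_cong:
  assumes eq: "\<forall>z\<in>A. \<rho> z = \<rho>' z" and neck: "is_neck A le \<rho> x y"
  shows "is_neck A le \<rho>' x y"
proof -
  have x: "x \<in> A" "y \<in> A" and level: "{z\<in>A. \<rho> z = \<rho> x} = {x, y}" and "\<rho> x = \<rho> y"
    using neck unfolding is_neck_def by blast+
  have "{z\<in>A. \<rho>' z = \<rho>' x} = {z\<in>A. \<rho> z = \<rho> x}" using eq x by auto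
  with level have "{z\<in>A. \<rho>' z = \<rho>' x} = {x, y}" by simp
  moreover have "\<rho>' x = \<rho>' y" using eq x \<open>\<rho> x = \<rho> y\<close> by simp
  ultimately show ?thesis using neck unfolding is_neck_def by blast
qed

lemma order_iso_neck:
  assumes h: "order_iso h A le B le'" and bounded: "bounded_poset A le"
    and neck: "is_neck A le (\<rho> \<circ> h) x y"
  shows "is_neck B le' \<rho> (h x) (h y)"
proof -
  have inj: "inj_on h A" using order_iso_inj[OF h] .
  have xy: "x \<in> A" "y \<in> A" "x \<noteq> y" "\<rho> (h x) = \<rho> (h y)"
    and level: "{z\<in>A. \<rho> (h z) = \<rho> (h x)} = {x, y}"
    using neck unfolding is_neck_def comp_def by blast+
  have "{z\<in>B. \<rho> z = \<rho> (h x)} = h ` {z\<in>A. \<rho> (h z) = \<rho> (h x)}"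
    unfolding order_iso_image[OF h, symmetric] by auto
  then have level': "{z\<in>B. \<rho> z = \<rho> (h x)} = {h x, h y}" unfolding level by simp
  have na: "x \<notin> atoms A le" "x \<notin> coatoms A le" "y \<notin> atoms A le" "y \<notin> coatoms A le"
    using neck unfolding is_neck_def by blast+
  have "h x \<notin> h ` atoms A le" "h x \<notin> h ` coatoms A le"
    "h y \<notin> h ` atoms A le" "h y \<notin> h ` coatoms A le"
    using na inj_on_image_mem_iff[OF inj xy(1) atoms_subset] inj_on_image_mem_iff[OF inj xy(1) coatoms_subset]
      inj_on_image_mem_iff[OF inj xy(2) atoms_subset] inj_on_image_mem_iff[OF inj xy(2) coatoms_subset]
    by simp_all
  then have "h x \<notin> atoms B le'" "h x \<notin> coatoms B le'" "h y \<notin> atoms B le'" "h y \<notin> coatoms B le'"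
    unfolding order_iso_atoms[OF h bounded] order_iso_coatoms[OF h bounded] .
  moreover have "h x \<in> B" "h y \<in> B" "h x \<noteq> h y"
    using order_iso_mem[OF h] inj_on_contraD[OF inj] xy by blast+
  ultimately show ?thesis using level' xy(4) unfolding is_neck_def by blast
qed

section \<open>The vertical 2-sum\<close>

locale vsum2_setting =
  fixes A :: "'a set" and le :: "'a \<Rightarrow> 'a \<Rightarrow> bool" and B :: "'a set" and le' :: "'a \<Rightarrow> 'a \<Rightarrow> bool"
    and \<phi> :: "'a \<Rightarrow> 'a" and \<rho>A :: "'a \<Rightarrow> nat" and \<rho>B :: "'a \<Rightarrow> nat"
  assumes finA: "finite A" and latA: "is_lattice A le"
    and finB: "finite B" and latB: "is_lattice B le'"
    and rkA: "rank_fun A le \<rho>A" and rank_topA: "\<rho>A (ptop A le) \<ge> 3"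
    and rkB: "rank_fun B le' \<rho>B" and rank_topB: "\<rho>B (ptop B le') \<ge> 3"
    and card_coA: "card (coatoms A le) = 2" and card_atB: "card (atoms B le') = 2"
    and phi: "bij_betw \<phi> (coatoms A le) (atoms B le')"
begin

abbreviation "tA \<equiv> ptop A le"
abbreviation "bA \<equiv> pbot A le"
abbreviation "tB \<equiv> ptop B le'"
abbreviation "bB \<equiv> pbot B le'"
abbreviation "coA \<equiv> coatoms A le"
abbreviation "atB \<equiv> atoms B le'"
abbreviation "\<psi> \<equiv> inv_into coA \<phi>"
abbreviation "rA \<equiv> \<rho>A tA"

definition up :: "'a \<Rightarrow> 'a + 'a" where
  "up u = (if u \<in> atB then Inl (\<psi> u) else Inr u)"

definition Sum :: "('a + 'a) set" where
  "Sum = Inl ` (A - {tA}) \<union> Inr ` (B - {bB} - atB)"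

definition sum_step :: "'a + 'a \<Rightarrow> 'a + 'a \<Rightarrow> bool" where
  "sum_step x y \<longleftrightarrow> (\<exists>a b. a \<in> A - {tA} \<and> b \<in> A - {tA} \<and> x = Inl a \<and> y = Inl b \<and> le a b)
     \<or> (\<exists>u v. u \<in> B - {bB} \<and> v \<in> B - {bB} \<and> x = up u \<and> y = up v \<and> le' u v)"

definition sum_le :: "'a + 'a \<Rightarrow> 'a + 'a \<Rightarrow> bool" where
  "sum_le = tranclp sum_step"

lemma vsum2_eq: "fst (vsum2 A le B le' \<phi>) = Sum" "snd (vsum2 A le B le' \<phi>) = sum_le"
  unfolding vsum2_def Let_def Sum_def sum_le_def sum_step_def up_def by simp_all

lemma poA: "poset A le" using is_lattice_poset[OF latA] .
lemma poB: "poset B le'" using is_lattice_poset[OF latB] .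

lemma tA: "tA \<in> A" "\<And>x. x \<in> A \<Longrightarrow> le x tA" using finite_lattice_ptop[OF finA latA] by auto
lemma bA: "bA \<in> A" "\<And>x. x \<in> A \<Longrightarrow> le bA x" using finite_lattice_pbot[OF finA latA] by auto
lemma tB: "tB \<in> B" "\<And>x. x \<in> B \<Longrightarrow> le' x tB" using finite_lattice_ptop[OF finB latB] by auto
lemma bB: "bB \<in> B" "\<And>x. x \<in> B \<Longrightarrow> le' bB x" using finite_lattice_pbot[OF finB latB] by auto

lemma rank_bA: "\<rho>A bA = 0" using rank_fun_pbot[OF rkA] .
lemma rank_bB: "\<rho>B bB = 0" using rank_fun_pbot[OF rkB] .

lemma bA_in: "bA \<in> A - {tA}" using bA(1) rank_bA rank_topA by auto
lemma tB_in: "tB \<in> B - {bB}" using tB(1) rank_bB rank_topB by auto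

lemma coA_iff: "c \<in> coA \<longleftrightarrow> c \<in> A \<and> \<rho>A c + 1 = rA"
  using coatoms_rank_iff[OF finA latA rkA] .

lemma atB_iff: "u \<in> atB \<longleftrightarrow> u \<in> B \<and> \<rho>B u = 1"
  using atoms_rank_iff[OF finB latB rkB] .

lemma coA_in: "c \<in> coA \<Longrightarrow> c \<in> A - {tA}" using coA_iff by auto
lemma atB_in: "u \<in> atB \<Longrightarrow> u \<in> B - {bB}" using atB_iff rank_bB by auto
lemma tB_notin_atB: "tB \<notin> atB" using atB_iff rank_topB by auto

lemma coA_maximal: "c \<in> coA \<Longrightarrow> a \<in> A - {tA} \<Longrightarrow> le c a \<Longrightarrow> a = c"
  unfolding coatoms_def covers_def using tA by blast

lemma atB_minimal: "u \<in> atB \<Longrightarrow> v \<in> B - {bB} \<Longrightarrow> le' v u \<Longrightarrow> v = u"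
  unfolding atoms_def covers_def using bB by blast

lemma phi_in: "c \<in> coA \<Longrightarrow> \<phi> c \<in> atB" using phi bij_betwE by blast
lemma psi_in: "u \<in> atB \<Longrightarrow> \<psi> u \<in> coA" using phi by (metis bij_betw_def inv_into_into)
lemma phi_psi: "u \<in> atB \<Longrightarrow> \<phi> (\<psi> u) = u" using phi by (metis bij_betw_def f_inv_into_f)
lemma psi_phi: "c \<in> coA \<Longrightarrow> \<psi> (\<phi> c) = c" using phi by (metis bij_betw_def inv_into_f_f)

lemma up_eq_Inl_iff: "up u = Inl a \<longleftrightarrow> u \<in> atB \<and> a = \<psi> u"
  unfolding up_def by auto

lemma up_phi: "c \<in> coA \<Longrightarrow> up (\<phi> c) = Inl c"
  using phi_in psi_phi unfolding up_def by simp

lemma up_tB: "up tB = Inr tB"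
  using tB_notin_atB unfolding up_def by simp

lemma up_inj: "up u = up v \<Longrightarrow> u = v"
  unfolding up_def by (auto split: if_splits) (metis phi_psi)

lemma Inl_in_Sum: "a \<in> A - {tA} \<Longrightarrow> Inl a \<in> Sum"
  unfolding Sum_def by blast

lemma up_in_Sum: "u \<in> B - {bB} \<Longrightarrow> up u \<in> Sum"
  unfolding Sum_def up_def using coA_in psi_in by auto

lemma Sum_cases:
  assumes "x \<in> Sum"
  obtains (lower) a where "a \<in> A - {tA}" "x = Inl a" | (upper) u where "u \<in> B - {bB}" "x = up u"
proof -
  have "x = up w" if "w \<notin> atB" "x = Inr w" for w
    using that unfolding up_def by simp
  with assms that show thesis unfolding Sum_def by blast
qed

text \<open>Explicit description of the transitive closure \<open>sum_le\<close>: a comparison inside \<open>A\<close>, one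
  inside \<open>B\<close>, or one that passes from \<open>A\<close> to \<open>B\<close> through an identified coatom/atom pair.\<close>

definition sum_rel :: "'a + 'a \<Rightarrow> 'a + 'a \<Rightarrow> bool" where
  "sum_rel x y \<longleftrightarrow> (\<exists>a b. a \<in> A - {tA} \<and> b \<in> A - {tA} \<and> x = Inl a \<and> y = Inl b \<and> le a b)
     \<or> (\<exists>u v. u \<in> B - {bB} \<and> v \<in> B - {bB} \<and> x = up u \<and> y = up v \<and> le' u v)
     \<or> (\<exists>a c v. a \<in> A - {tA} \<and> c \<in> coA \<and> v \<in> B - {bB} \<and> le a c \<and> le' (\<phi> c) v
          \<and> x = Inl a \<and> y = up v)"

lemma sum_relE:
  assumes "sum_rel x y"
  obtains (lower) a b where "a \<in> A - {tA}" "b \<in> A - {tA}" "x = Inl a" "y = Inl b" "le a b"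
    | (upper) u v where "u \<in> B - {bB}" "v \<in> B - {bB}" "x = up u" "y = up v" "le' u v"
    | (cross) a c v where "a \<in> A - {tA}" "c \<in> coA" "v \<in> B - {bB}" "le a c" "le' (\<phi> c) v"
        "x = Inl a" "y = up v"
  using assms unfolding sum_rel_def by blast

lemma sum_rel_lowerI: "a \<in> A - {tA} \<Longrightarrow> b \<in> A - {tA} \<Longrightarrow> le a b \<Longrightarrow> sum_rel (Inl a) (Inl b)"
  unfolding sum_rel_def by blast

lemma sum_rel_upperI: "u \<in> B - {bB} \<Longrightarrow> v \<in> B - {bB} \<Longrightarrow> le' u v \<Longrightarrow> sum_rel (up u) (up v)"
  unfolding sum_rel_def by blast

lemma sum_rel_crossI:
  "a \<in> A - {tA} \<Longrightarrow> c \<in> coA \<Longrightarrow> v \<in> B - {bB} \<Longrightarrow> le a c \<Longrightarrow> le' (\<phi> c) v \<Longrightarrow> sum_rel (Inl a) (up v)"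
  unfolding sum_rel_def by blast

lemma transA: "x \<in> A \<Longrightarrow> y \<in> A \<Longrightarrow> z \<in> A \<Longrightarrow> le x y \<Longrightarrow> le y z \<Longrightarrow> le x z"
  using poset_trans[OF poA] by blast

lemma transB: "x \<in> B \<Longrightarrow> y \<in> B \<Longrightarrow> z \<in> B \<Longrightarrow> le' x y \<Longrightarrow> le' y z \<Longrightarrow> le' x z"
  using poset_trans[OF poB] by blast

lemma Inl_eq_up_iff: "Inl a = up u \<longleftrightarrow> u \<in> atB \<and> a = \<psi> u"
  using up_eq_Inl_iff by metis

text \<open>An element of the form \<open>Inl c = up v\<close> is a coatom \<open>c\<close> of \<open>A\<close> and an atom \<open>v\<close> of \<open>B\<close>,
  so nothing in \<open>A - {tA}\<close> lies strictly above it and nothing in \<open>B - {bB}\<close> strictly below it.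
  Hence everything below an \<open>Inl\<close>-element comes from \<open>A\<close>, and everything above an
  \<open>up\<close>-element comes from \<open>B\<close>.\<close>

lemma sum_rel_InlE:
  assumes "sum_rel x (Inl b)"
  obtains a where "a \<in> A - {tA}" "b \<in> A - {tA}" "x = Inl a" "le a b"
  using assms
proof (cases rule: sum_relE)
  case (upper u v)
  then have v: "v \<in> atB" "b = \<psi> v" using Inl_eq_up_iff by metis+
  then have "x = Inl b" using atB_minimal[OF v(1), of u] upper Inl_eq_up_iff by metis
  then show ?thesis using that v psi_in coA_in poset_refl[OF poA] by blast
next
  case (cross a c v)
  then have v: "v \<in> atB" "b = \<psi> v" using Inl_eq_up_iff by metis+
  have "\<phi> c = v" using atB_minimal[OF v(1), of "\<phi> c"] cross atB_in phi_in by blast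
  then have "c = b" using psi_phi cross v by metis
  then show ?thesis using that cross coA_in by blast
qed simp

lemma sum_rel_upE:
  assumes "sum_rel (up u) z"
  obtains w where "u \<in> B - {bB}" "w \<in> B - {bB}" "z = up w" "le' u w"
  using assms
proof (cases rule: sum_relE)
  case (lower a b)
  then have u: "u \<in> atB" "a = \<psi> u" using up_eq_Inl_iff by metis+
  then have "z = up u" using coA_maximal[of a b] psi_in lower up_eq_Inl_iff by metis
  then show ?thesis using that u atB_in poset_refl[OF poB] by blast
next
  case (upper u' w)
  then show ?thesis using that up_inj by metis
next
  case (cross a c w)
  then have u: "u \<in> atB" "a = \<psi> u" using up_eq_Inl_iff by metis+
  then have "c = a" using coA_maximal[of a c] psi_in cross coA_in by blast
  then show ?thesis using that u cross phi_psi atB_in by metis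
qed

lemma sum_rel_trans_Inl:
  assumes xy: "sum_rel x (Inl b)" and yz: "sum_rel (Inl b) z"
  shows "sum_rel x z"
proof -
  obtain a where a: "a \<in> A - {tA}" "b \<in> A - {tA}" "x = Inl a" "le a b"
    using xy by (rule sum_rel_InlE)
  from yz show ?thesis
  proof (cases rule: sum_relE)
    case (lower b' c)
    then show ?thesis using a transA sum_rel_lowerI by (metis Diff_iff sum.inject(1))
  next
    case (upper u w)
    then have "b \<in> coA" "\<phi> b = u" using Inl_eq_up_iff psi_in phi_psi by metis+
    then show ?thesis using a upper sum_rel_crossI by metis
  next
    case (cross b' c w)
    then show ?thesis using a transA[of a b c] coA_in sum_rel_crossI by blast
  qed
qed

lemma sum_rel_trans_up:
  assumes xy: "sum_rel x (up v)" and yz: "sum_rel (up v) z"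
  shows "sum_rel x z"
proof -
  obtain w where w: "v \<in> B - {bB}" "w \<in> B - {bB}" "z = up w" "le' v w"
    using yz by (rule sum_rel_upE)
  from xy show ?thesis
  proof (cases rule: sum_relE)
    case (lower a b)
    then have "b \<in> coA" "\<phi> b = v" using Inl_eq_up_iff psi_in phi_psi by metis+
    then show ?thesis using lower w sum_rel_crossI by metis
  next
    case (upper u v')
    then show ?thesis using w up_inj transB sum_rel_upperI by (metis Diff_iff)
  next
    case (cross a c v')
    then have "le' (\<phi> c) w" using w up_inj transB[of "\<phi> c" v w] phi_in atB_in by blast
    then show ?thesis using cross w sum_rel_crossI by blast
  qed
qed

lemma sum_rel_trans: "sum_rel x y \<Longrightarrow> sum_rel y z \<Longrightarrow> sum_rel x z"
  by (cases rule: sum_relE) (auto intro: sum_rel_trans_Inl sum_rel_trans_up)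

lemma sum_le_iff: "sum_le x y \<longleftrightarrow> sum_rel x y"
proof
  assume "sum_le x y"
  then show "sum_rel x y"
    unfolding sum_le_def
  proof (induction rule: tranclp.induct)
    case (r_into_trancl a b)
    then show ?case unfolding sum_step_def sum_rel_def by blast
  next
    case (trancl_into_trancl a b c)
    then have "sum_rel b c" unfolding sum_step_def sum_rel_def by blast
    with trancl_into_trancl.IH show ?case using sum_rel_trans by blast
  qed
next
  assume "sum_rel x y"
  then show "sum_le x y"
  proof (cases rule: sum_relE)
    case (cross a c v)
    have "sum_step (Inl a) (Inl c)" unfolding sum_step_def using cross coA_in by blast
    moreover have "sum_step (up (\<phi> c)) (up v)" unfolding sum_step_def using cross atB_in phi_in by blast
    ultimately show ?thesis unfolding sum_le_def using up_phi[OF \<open>c \<in> coA\<close>] cross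
      by (metis tranclp.r_into_trancl tranclp.trancl_into_trancl)
  qed (unfold sum_le_def sum_step_def, blast+)
qed

lemma sum_le_InlE:
  assumes "sum_le x (Inl b)"
  obtains a where "a \<in> A - {tA}" "b \<in> A - {tA}" "x = Inl a" "le a b"
  using assms sum_rel_InlE unfolding sum_le_iff by blast

lemma sum_le_upE:
  assumes "sum_le (up u) z"
  obtains w where "u \<in> B - {bB}" "w \<in> B - {bB}" "z = up w" "le' u w"
  using assms sum_rel_upE unfolding sum_le_iff by blast

lemma Inl_le_Inl_iff:
  assumes "a \<in> A - {tA}" "b \<in> A - {tA}"
  shows "sum_le (Inl a) (Inl b) \<longleftrightarrow> le a b"
  using assms sum_rel_lowerI sum_le_InlE unfolding sum_le_iff by (metis sum.inject(1))

lemma up_le_up_iff: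
  assumes "u \<in> B - {bB}" "v \<in> B - {bB}"
  shows "sum_le (up u) (up v) \<longleftrightarrow> le' u v"
  using assms sum_rel_upperI sum_le_upE up_inj unfolding sum_le_iff by metis

lemma poset_Sum: "poset Sum sum_le"
  unfolding poset_def
proof (intro conjI ballI impI)
  fix x assume "x \<in> Sum"
  then show "sum_le x x"
    by (cases rule: Sum_cases)
      (use Inl_le_Inl_iff up_le_up_iff poset_refl[OF poA] poset_refl[OF poB] in auto)
next
  fix x y assume x: "x \<in> Sum" and y: "y \<in> Sum" and xy: "sum_le x y \<and> sum_le y x"
  have antisym_up: "x = y" if "u \<in> B - {bB}" "v \<in> B - {bB}" "x = up u" "y = up v" for u v
    using that xy up_le_up_iff poset_antisym[OF poB] by (metis DiffD1)
  from x show "x = y"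
  proof (cases rule: Sum_cases)
    case (upper u)
    then show ?thesis using sum_le_upE xy antisym_up by metis
  next
    case (lower a)
    from y show ?thesis
    proof (cases rule: Sum_cases)
      case (lower b)
      then show ?thesis using \<open>x = Inl a\<close> \<open>a \<in> A - {tA}\<close> xy Inl_le_Inl_iff poset_antisym[OF poA]
        by (metis DiffD1)
    next
      case (upper v)
      then show ?thesis using sum_le_upE xy antisym_up by metis
    qed
  qed
next
  fix x y z assume "sum_le x y \<and> sum_le y z"
  then show "sum_le x z" unfolding sum_le_def by (meson tranclp_trans)
qed

lemma top_Sum: "Inr tB \<in> Sum" "\<And>x. x \<in> Sum \<Longrightarrow> sum_le x (Inr tB)"
proof -
  show "Inr tB \<in> Sum" using up_in_Sum[OF tB_in] up_tB by simp
  fix x assume "x \<in> Sum"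
  then show "sum_le x (Inr tB)"
  proof (cases rule: Sum_cases)
    case (lower a)
    obtain c where c: "c \<in> A" "covers A le c tA" "le a c"
      using exists_cover_below[OF finA poA _ tA(1)] tA(2) lower(1) by blast
    then have "c \<in> coA" unfolding coatoms_def by blast
    moreover have "le' (\<phi> c) tB" using tB(2) atB_in phi_in \<open>c \<in> coA\<close> by blast
    ultimately show ?thesis
      using sum_rel_crossI[OF lower(1) _ tB_in c(3)] sum_le_iff lower(2) up_tB by simp
  next
    case (upper u)
    then show ?thesis using up_le_up_iff[OF upper(1) tB_in] tB(2) up_tB by simp
  qed
qed

lemma bot_Sum: "Inl bA \<in> Sum" "\<And>x. x \<in> Sum \<Longrightarrow> sum_le (Inl bA) x"
proof -
  show "Inl bA \<in> Sum" using Inl_in_Sum[OF bA_in] .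
  fix x assume "x \<in> Sum"
  then show "sum_le (Inl bA) x"
  proof (cases rule: Sum_cases)
    case (lower a)
    then show ?thesis using Inl_le_Inl_iff[OF bA_in lower(1)] bA(2) by blast
  next
    case (upper w)
    obtain u where u: "u \<in> B" "covers B le' bB u" "le' u w"
      using exists_cover_above[OF finB poB bB(1)] bB(2) upper(1) by blast
    then have "u \<in> atB" unfolding atoms_def by blast
    then have "\<psi> u \<in> coA" "\<phi> (\<psi> u) = u" using psi_in phi_psi by auto
    moreover have "le bA (\<psi> u)" using bA(2) coA_in \<open>\<psi> u \<in> coA\<close> by blast
    ultimately show ?thesis
      using sum_rel_crossI[OF bA_in _ upper(1)] u(3) sum_le_iff upper(2) by metis
  qed
qed

lemma bounded_poset_Sum: "bounded_poset Sum sum_le"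
  using bounded_posetI[OF poset_Sum bot_Sum(1) _ top_Sum(1)] bot_Sum(2) top_Sum(2) by blast

lemma ptop_Sum: "ptop Sum sum_le = Inr tB"
  using ptop_eqI[OF poset_Sum top_Sum(1)] top_Sum(2) by blast

lemma pbot_Sum: "pbot Sum sum_le = Inl bA"
  using pbot_eqI[OF poset_Sum bot_Sum(1)] bot_Sum(2) by blast

lemma finite_Sum: "finite Sum"
  unfolding Sum_def using finA finB by simp

text \<open>The ranks of \<open>B\<close> are shifted by \<open>rA - 2\<close>, so that the atoms of \<open>B\<close> land on the rank
  \<open>rA - 1\<close> of the coatoms of \<open>A\<close> they are identified with.\<close>

definition sum_rank :: "'a + 'a \<Rightarrow> nat" where
  "sum_rank x = (case x of Inl a \<Rightarrow> \<rho>A a | Inr u \<Rightarrow> \<rho>B u + rA - 2)"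

lemma sum_rank_Inl [simp]: "sum_rank (Inl a) = \<rho>A a"
  unfolding sum_rank_def by simp

lemma rankA_less: "a \<in> A - {tA} \<Longrightarrow> \<rho>A a < rA"
  using rank_less_ptop[OF finA latA rkA] by blast

lemma rankB_pos: "u \<in> B - {bB} \<Longrightarrow> 0 < \<rho>B u"
  using rank_pos[OF finB latB rkB] by blast

lemma sum_rank_up: "u \<in> B - {bB} \<Longrightarrow> sum_rank (up u) = \<rho>B u + rA - 2"
proof (cases "u \<in> atB")
  case True
  then have "\<rho>A (\<psi> u) + 1 = rA" "\<rho>B u = 1" using psi_in coA_iff atB_iff by blast+
  then show ?thesis using True rank_topA unfolding up_def by simp
next
  case False
  then show ?thesis unfolding up_def sum_rank_def by simp
qed

lemma covers_Inl_Inl: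
  assumes ab: "a \<in> A - {tA}" "b \<in> A - {tA}" and c: "covers Sum sum_le (Inl a) (Inl b)"
  shows "covers A le a b"
  unfolding covers_def
proof (intro conjI ballI impI)
  show "a \<in> A" "b \<in> A" using ab by auto
  show "le a b" "a \<noteq> b" using covers_mem[OF c] Inl_le_Inl_iff[OF ab] by auto
  fix z assume z: "z \<in> A" "le a z \<and> le z b"
  have "z \<noteq> tA" using poset_antisym[OF poA, of b tA] tA z ab by blast
  then have zs: "z \<in> A - {tA}" using z by blast
  have "sum_le (Inl a) (Inl z)" "sum_le (Inl z) (Inl b)"
    using Inl_le_Inl_iff[OF ab(1) zs] Inl_le_Inl_iff[OF zs ab(2)] z by blast+
  then show "z = a \<or> z = b" using c Inl_in_Sum[OF zs] unfolding covers_def by blast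
qed

lemma covers_up_up:
  assumes uv: "u \<in> B - {bB}" "v \<in> B - {bB}" and c: "covers Sum sum_le (up u) (up v)"
  shows "covers B le' u v"
  unfolding covers_def
proof (intro conjI ballI impI)
  show "u \<in> B" "v \<in> B" using uv by auto
  show "le' u v" "u \<noteq> v" using covers_mem[OF c] up_le_up_iff[OF uv] by auto
  fix z assume z: "z \<in> B" "le' u z \<and> le' z v"
  have "z \<noteq> bB" using poset_antisym[OF poB, of u bB] bB z uv by blast
  then have zs: "z \<in> B - {bB}" using z by blast
  have "sum_le (up u) (up z)" "sum_le (up z) (up v)"
    using up_le_up_iff[OF uv(1) zs] up_le_up_iff[OF zs uv(2)] z by blast+
  then have "up z = up u \<or> up z = up v" using c up_in_Sum[OF zs] unfolding covers_def by blast
  then show "z = u \<or> z = v" using up_inj by blast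
qed

lemma covers_SumE:
  assumes c: "covers Sum sum_le x y"
  obtains (lower) a b where "a \<in> A - {tA}" "b \<in> A - {tA}" "x = Inl a" "y = Inl b" "covers A le a b"
    | (upper) u v where "u \<in> B - {bB}" "v \<in> B - {bB}" "x = up u" "y = up v" "covers B le' u v"
proof -
  have "sum_rel x y" using covers_mem[OF c] sum_le_iff by blast
  then show thesis
  proof (cases rule: sum_relE)
    case (lower a b)
    then show ?thesis using that(1) covers_Inl_Inl c by blast
  next
    case (upper u v)
    then show ?thesis using that(2) covers_up_up c by blast
  next
    case (cross a c v)
    have cs: "c \<in> A - {tA}" using coA_in cross(2) .
    have ps: "\<phi> c \<in> B - {bB}" using atB_in phi_in cross(2) by blast
    have "sum_le x (Inl c)" using Inl_le_Inl_iff[OF cross(1) cs] cross by simp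
    moreover have "sum_le (Inl c) y" using up_le_up_iff[OF ps cross(3)] cross up_phi by simp
    ultimately have "Inl c = x \<or> Inl c = y" using c Inl_in_Sum[OF cs] unfolding covers_def by blast
    then show ?thesis
    proof
      assume "Inl c = x"
      then have "x = up (\<phi> c)" using up_phi cross(2) by simp
      then show ?thesis using that(2) covers_up_up[OF ps cross(3)] c cross ps by simp
    next
      assume "Inl c = y"
      then show ?thesis using that(1) covers_Inl_Inl[OF cross(1) cs] c cross cs by simp
    qed
  qed
qed

lemma rank_fun_Sum: "rank_fun Sum sum_le sum_rank"
  unfolding rank_fun_def
proof (intro conjI allI impI)
  show "sum_rank (pbot Sum sum_le) = 0" using pbot_Sum rank_bA by simp
  fix x y assume "covers Sum sum_le x y"
  then show "sum_rank y = sum_rank x + 1"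
  proof (cases rule: covers_SumE)
    case (lower a b)
    then show ?thesis using rank_fun_covers[OF rkA] by simp
  next
    case (upper u v)
    then show ?thesis using rank_fun_covers[OF rkB] sum_rank_up rank_topA by simp
  qed
qed

lemma sum_rank_ptop: "sum_rank (ptop Sum sum_le) = \<rho>B tB + rA - 2"
  using ptop_Sum sum_rank_up[OF tB_in] up_tB by simp

lemma atoms_Sum: "atoms Sum sum_le = Inl ` atoms A le"
proof (intro equalityI subsetI)
  fix y :: "'a + 'a" assume "y \<in> atoms Sum sum_le"
  then have "covers Sum sum_le (Inl bA) y" unfolding atoms_def pbot_Sum by simp
  then show "y \<in> Inl ` atoms A le"
  proof (cases rule: covers_SumE)
    case (lower a b)
    then show ?thesis unfolding atoms_def by simp
  next
    case (upper u v)
    then have "bA \<in> coA" using Inl_eq_up_iff psi_in by metis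
    then show ?thesis using coA_iff rank_bA rank_topA by simp
  qed
next
  fix y :: "'a + 'a" assume "y \<in> Inl ` atoms A le"
  then obtain a where a: "a \<in> atoms A le" "y = Inl a" by blast
  have ca: "covers A le bA a" using a(1) unfolding atoms_def by simp
  then have aA: "a \<in> A - {tA}"
    using atoms_rank_iff[OF finA latA rkA] a(1) rank_topA by auto
  have "covers Sum sum_le (Inl bA) (Inl a)" unfolding covers_def
  proof (intro conjI ballI impI)
    show "Inl bA \<in> Sum" "Inl a \<in> Sum" using Inl_in_Sum bA_in aA by auto
    show "sum_le (Inl bA) (Inl a)" "Inl bA \<noteq> Inl a"
      using Inl_le_Inl_iff[OF bA_in aA] covers_mem[OF ca] by auto
    fix z assume z: "z \<in> Sum" "sum_le (Inl bA) z \<and> sum_le z (Inl a)"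
    then obtain z' where z': "z' \<in> A - {tA}" "z = Inl z'" by (blast elim: sum_le_InlE)
    then have "le bA z'" "le z' a" using Inl_le_Inl_iff[OF bA_in z'(1)] Inl_le_Inl_iff[OF z'(1) aA] z
      by blast+
    then show "z = Inl bA \<or> z = Inl a" using ca z' unfolding covers_def by blast
  qed
  then show "y \<in> atoms Sum sum_le" unfolding atoms_def pbot_Sum a(2) by simp
qed

lemma coatoms_Sum: "coatoms Sum sum_le = Inr ` coatoms B le'"
proof (intro equalityI subsetI)
  fix x :: "'a + 'a" assume "x \<in> coatoms Sum sum_le"
  then have "covers Sum sum_le x (up tB)" unfolding coatoms_def ptop_Sum up_tB by simp
  then show "x \<in> Inr ` coatoms B le'"
  proof (cases rule: covers_SumE)
    case (lower a b)
    then show ?thesis using up_tB by simp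
  next
    case (upper u v)
    then have cu: "u \<in> coatoms B le'" using up_inj unfolding coatoms_def by blast
    then have "u \<notin> atB" using coatoms_rank_iff[OF finB latB rkB] atB_iff rank_topB by auto
    then show ?thesis using cu upper unfolding up_def by simp
  qed
next
  fix x :: "'a + 'a" assume "x \<in> Inr ` coatoms B le'"
  then obtain u where u: "u \<in> coatoms B le'" "x = Inr u" by blast
  have cv: "covers B le' u tB" using u(1) unfolding coatoms_def by simp
  have us: "u \<in> B - {bB}" and "u \<notin> atB"
    using u(1) coatoms_rank_iff[OF finB latB rkB] atB_iff rank_topB rank_bB by auto
  then have gu: "up u = Inr u" unfolding up_def by simp
  have "covers Sum sum_le (up u) (up tB)" unfolding covers_def
  proof (intro conjI ballI impI)
    show "up u \<in> Sum" "up tB \<in> Sum" using up_in_Sum us tB_in by auto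
    show "sum_le (up u) (up tB)" "up u \<noteq> up tB"
      using up_le_up_iff[OF us tB_in] covers_mem[OF cv] up_inj by blast+
    fix z assume z: "z \<in> Sum" "sum_le (up u) z \<and> sum_le z (up tB)"
    then obtain z' where z': "z' \<in> B - {bB}" "z = up z'" by (blast elim: sum_le_upE)
    then have "le' u z'" "le' z' tB" using up_le_up_iff[OF us z'(1)] up_le_up_iff[OF z'(1) tB_in] z
      by blast+
    then show "z = up u \<or> z = up tB" using cv z' unfolding covers_def by blast
  qed
  then show "x \<in> coatoms Sum sum_le" unfolding coatoms_def ptop_Sum u(2) using gu up_tB by simp
qed

lemma card_Sum: "card Sum = card A + card B - 4"
proof -
  have "card Sum = card (A - {tA}) + card (B - {bB} - atB)"
    unfolding Sum_def using finA finB
    by (subst card_Un_disjoint) (auto simp: card_image)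
  also have "card (B - {bB} - atB) = card (B - {bB}) - 2"
    using atB_in finB card_atB by (subst card_Diff_subset) (auto intro: finite_subset)
  also have "card (A - {tA}) = card A - 1" using tA(1) finA by simp
  also have "card (B - {bB}) = card B - 1" using bB(1) finB by simp
  finally have "card Sum = (card A - 1) + (card B - 1 - 2)" .
  moreover have "card (B - {bB}) \<ge> 2"
    using card_mono[of "B - {bB}" atB] card_atB atB_in finB by fastforce
  moreover have "card A \<ge> 1" using tA(1) finA card_0_eq[of A] by fastforce
  ultimately show ?thesis using \<open>card (B - {bB}) = card B - 1\<close> by simp
qed

lemma lower_part: "{x\<in>Sum. sum_rank x \<le> rA - 1} = Inl ` (A - {tA})"
proof (intro equalityI subsetI)
  fix x assume "x \<in> {x\<in>Sum. sum_rank x \<le> rA - 1}"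
  then have "x \<in> Sum" and x: "sum_rank x \<le> rA - 1" by auto
  from this(1) show "x \<in> Inl ` (A - {tA})"
  proof (cases rule: Sum_cases)
    case (upper u)
    show ?thesis
    proof (cases "u \<in> atB")
      case True
      then show ?thesis using upper psi_in coA_in unfolding up_def by auto
    next
      case False
      then have "\<rho>B u \<ge> 2" using atB_iff rankB_pos[OF upper(1)] upper(1) by fastforce
      then have "sum_rank x \<ge> rA" using sum_rank_up[OF upper(1)] upper(2) rank_topA by simp
      then show ?thesis using x rank_topA by linarith
    qed
  qed simp
next
  fix x :: "'a + 'a" assume "x \<in> Inl ` (A - {tA})"
  then show "x \<in> {x\<in>Sum. sum_rank x \<le> rA - 1}" using rankA_less Inl_in_Sum by fastforce
qed

lemma upper_part: "{x\<in>Sum. sum_rank x \<ge> rA - 1} = up ` (B - {bB})"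
proof (intro equalityI subsetI)
  fix x assume "x \<in> {x\<in>Sum. sum_rank x \<ge> rA - 1}"
  then have "x \<in> Sum" and x: "sum_rank x \<ge> rA - 1" by auto
  from this(1) show "x \<in> up ` (B - {bB})"
  proof (cases rule: Sum_cases)
    case (lower a)
    then have "\<rho>A a + 1 = rA" using rankA_less[OF lower(1)] x lower(2) by simp
    then have "a \<in> coA" using coA_iff lower(1) by blast
    then show ?thesis using up_phi lower(2) phi_in atB_in by (metis image_eqI)
  qed simp
next
  fix x :: "'a + 'a" assume "x \<in> up ` (B - {bB})"
  then obtain u where u: "u \<in> B - {bB}" "x = up u" by blast
  then show "x \<in> {x\<in>Sum. sum_rank x \<ge> rA - 1}"
    using rankB_pos[OF u(1)] sum_rank_up[OF u(1)] up_in_Sum rank_topA by auto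
qed

lemma middle_level: "{x\<in>Sum. sum_rank x = rA - 1} = Inl ` coA"
proof -
  have "{x\<in>Sum. sum_rank x = rA - 1} = {x \<in> {x\<in>Sum. sum_rank x \<le> rA - 1}. sum_rank x = rA - 1}"
    by auto
  also have "\<dots> = Inl ` {a\<in>A - {tA}. \<rho>A a = rA - 1}"
    unfolding lower_part by auto
  also have "{a\<in>A - {tA}. \<rho>A a = rA - 1} = coA"
    using coA_iff coA_in rank_topA by fastforce
  finally show ?thesis .
qed

lemma neck_at_middle: "\<exists>x y. is_neck Sum sum_le sum_rank x y \<and> sum_rank x = rA - 1"
proof -
  obtain c1 c2 where cc: "coA = {c1, c2}" "c1 \<noteq> c2" using card_coA card_2_iff by metis
  have "c1 \<in> coA" "c2 \<in> coA" using cc by auto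
  then have r: "sum_rank (Inl c1) = rA - 1" "sum_rank (Inl c2) = rA - 1"
    using coA_iff by fastforce+
  have "c \<notin> atoms A le" if "c \<in> coA" for c
    using that coA_iff atoms_rank_iff[OF finA latA rkA] rank_topA by auto
  then have "Inl c1 \<notin> atoms Sum sum_le" "Inl c2 \<notin> atoms Sum sum_le"
    using cc atoms_Sum by auto
  moreover have "Inl c1 \<notin> coatoms Sum sum_le" "Inl c2 \<notin> coatoms Sum sum_le"
    using coatoms_Sum by auto
  moreover have "{x\<in>Sum. sum_rank x = sum_rank (Inl c1)} = {Inl c1, Inl c2}"
    using middle_level r cc by simp
  moreover have "Inl c1 \<in> Sum" "Inl c2 \<in> Sum" using cc coA_in Inl_in_Sum by auto
  ultimately have "is_neck Sum sum_le sum_rank (Inl c1) (Inl c2)"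
    unfolding is_neck_def using cc(2) r by simp
  then show ?thesis using r by blast
qed

lemma neck_below_middle:
  assumes neck: "is_neck Sum sum_le sum_rank x y" and r: "sum_rank x < rA - 1"
  shows "\<exists>a b. is_neck A le \<rho>A a b"
proof -
  have xy: "x \<in> Sum" "y \<in> Sum" "x \<noteq> y" "sum_rank x = sum_rank y"
    and level: "{z\<in>Sum. sum_rank z = sum_rank x} = {x, y}"
    and not_atoms: "x \<notin> atoms Sum sum_le" "y \<notin> atoms Sum sum_le"
    using neck unfolding is_neck_def by blast+
  have "x \<in> Inl ` (A - {tA})" "y \<in> Inl ` (A - {tA})"
    unfolding lower_part[symmetric] using xy r by auto
  then obtain a b where ab: "a \<in> A - {tA}" "x = Inl a" "b \<in> A - {tA}" "y = Inl b" by blast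
  have rank_a: "\<rho>A a < rA - 1" using r ab(2) by simp
  have "{z\<in>A. \<rho>A z = \<rho>A a} = {a, b}"
  proof (intro equalityI subsetI)
    fix z assume "z \<in> {z\<in>A. \<rho>A z = \<rho>A a}"
    then have z: "z \<in> A" "\<rho>A z = \<rho>A a" by auto
    then have "z \<noteq> tA" using rank_a by auto
    then have "Inl z \<in> {z\<in>Sum. sum_rank z = sum_rank x}" using Inl_in_Sum z ab(2) by simp
    then have "Inl z \<in> {x, y}" unfolding level .
    then show "z \<in> {a, b}" using ab(2,4) by auto
  next
    fix z assume "z \<in> {a, b}"
    then show "z \<in> {z\<in>A. \<rho>A z = \<rho>A a}" using ab xy(4) by auto
  qed
  moreover have "a \<notin> atoms A le" "b \<notin> atoms A le" using not_atoms atoms_Sum ab by auto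
  moreover have "a \<notin> coA" "b \<notin> coA" using coA_iff ab xy r by auto
  moreover have "a \<in> A" "b \<in> A" "a \<noteq> b" "\<rho>A a = \<rho>A b" using ab xy by auto
  ultimately show ?thesis unfolding is_neck_def by blast
qed

end

section \<open>Uniqueness of the decomposition into a piece and a summand\<close>

lemma order_iso_rank_eq:
  assumes h: "order_iso h A le B le'" and "finite A" "bounded_poset A le"
    and "rank_fun A le \<rho>" "rank_fun B le' \<rho>'"
  shows "\<forall>z\<in>A. \<rho> z = \<rho>' (h z)"
proof
  fix z assume "z \<in> A"
  have bot: "pbot A le \<in> A" "\<forall>x\<in>A. le (pbot A le) x" using bounded_poset_pbot[OF assms(3)] by auto
  show "\<rho> z = \<rho>' (h z)"
    using rank_fun_unique[OF assms(2) bounded_poset_poset[OF assms(3)] bot assms(4)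
        order_iso_rank_fun[OF h assms(3,5)] \<open>z \<in> A\<close>]
    by simp
qed

lemma order_iso_image_level:
  assumes "order_iso h A le B le'" "\<forall>z\<in>A. \<rho> z = \<rho>' (h z)"
  shows "h ` {x\<in>A. P (\<rho> x)} = {y\<in>B. P (\<rho>' y)}"
  using assms order_iso_image[OF assms(1)] by auto

lemma iso_of_corresponding_parts:
  assumes h: "order_iso h S L S' L'"
    and e: "inj_on e X" "e ` X \<subseteq> S" "\<forall>x\<in>X. \<forall>y\<in>X. le x y \<longleftrightarrow> L (e x) (e y)"
    and e': "inj_on e' X'" "\<forall>x\<in>X'. \<forall>y\<in>X'. le' x y \<longleftrightarrow> L' (e' x) (e' y)"
    and corresponding: "h ` e ` X = e' ` X'"
  shows "iso X le X' le'"
proof -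
  define k where "k = inv_into X' e' \<circ> h \<circ> e"
  have ek: "e' (k x) = h (e x)" "k x \<in> X'" if "x \<in> X" for x
  proof -
    have "h (e x) \<in> h ` e ` X" using that by blast
    then have "h (e x) \<in> e' ` X'" unfolding corresponding .
    then show "e' (k x) = h (e x)" "k x \<in> X'"
      unfolding k_def by (simp_all add: f_inv_into_f inv_into_into)
  qed
  have eS: "e x \<in> S" if "x \<in> X" for x using e(2) that by blast
  have order: "le x y \<longleftrightarrow> le' (k x) (k y)" if "x \<in> X" "y \<in> X" for x y
  proof -
    have "le x y \<longleftrightarrow> L (e x) (e y)" using e(3) that by blast
    also have "\<dots> \<longleftrightarrow> L' (h (e x)) (h (e y))" using order_iso_le[OF h] eS that by blast
    also have "\<dots> \<longleftrightarrow> L' (e' (k x)) (e' (k y))" using ek(1) that by simp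
    also have "\<dots> \<longleftrightarrow> le' (k x) (k y)" using e'(2) ek(2) that by blast
    finally show ?thesis .
  qed
  have "inj_on k X"
  proof (rule inj_onI)
    fix x y assume "x \<in> X" "y \<in> X" "k x = k y"
    then have "h (e x) = h (e y)" using ek by metis
    then have "e x = e y" using order_iso_inj[OF h] eS \<open>x \<in> X\<close> \<open>y \<in> X\<close> by (meson inj_onD)
    then show "x = y" using inj_onD[OF e(1)] \<open>x \<in> X\<close> \<open>y \<in> X\<close> by blast
  qed
  moreover have "k ` X = X'"
  proof
    show "k ` X \<subseteq> X'" using ek(2) by blast
    show "X' \<subseteq> k ` X"
    proof
      fix y assume "y \<in> X'"
      then have "e' y \<in> h ` e ` X" unfolding corresponding by (rule imageI)
      then obtain x where "x \<in> X" "h (e x) = e' y" by (metis imageE)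
      then have "e' (k x) = e' y" using ek(1) by simp
      then have "k x = y" using inj_onD[OF e'(1)] ek(2) \<open>x \<in> X\<close> \<open>y \<in> X'\<close> by blast
      then show "y \<in> k ` X" using \<open>x \<in> X\<close> by blast
    qed
  qed
  ultimately show ?thesis unfolding iso_def bij_betw_def using order by blast
qed

lemma iso_extend_ptop:
  assumes A: "bounded_poset A le" and B: "bounded_poset B le'"
    and "iso (A - {ptop A le}) le (B - {ptop B le'}) le'"
  shows "iso A le B le'"
proof -
  let ?tA = "ptop A le" and ?tB = "ptop B le'"
  obtain k where k: "order_iso k (A - {?tA}) le (B - {?tB}) le'"
    using assms(3) iso_iff_order_iso by blast
  define k' where "k' = k(?tA := ?tB)"
  have k'_k: "k' x = k x" if "x \<in> A - {?tA}" for x using that unfolding k'_def by simp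
  have tA: "?tA \<in> A" "\<And>x. x \<in> A \<Longrightarrow> le x ?tA" using bounded_poset_ptop[OF A] by blast+
  have tB: "?tB \<in> B" "\<And>y. y \<in> B \<Longrightarrow> le' y ?tB" using bounded_poset_ptop[OF B] by blast+
  have "bij_betw k' (A - {?tA}) (B - {?tB})"
    using bij_betw_cong[of "A - {?tA}" k' k] k'_k k unfolding order_iso_def by blast
  moreover have "bij_betw k' {?tA} {?tB}" unfolding k'_def by simp
  ultimately have "bij_betw k' ((A - {?tA}) \<union> {?tA}) ((B - {?tB}) \<union> {?tB})"
    by (rule bij_betw_combine) blast
  then have bij: "bij_betw k' A B" using tA(1) tB(1) by (simp add: insert_absorb)
  have "le x y \<longleftrightarrow> le' (k' x) (k' y)" if "x \<in> A" "y \<in> A" for x y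
  proof (cases "y = ?tA")
    case True
    then show ?thesis using tA(2) tB(2) bij_betwE[OF bij] that k'_def by simp
  next
    case False
    show ?thesis
    proof (cases "x = ?tA")
      case True
      have "\<not> le ?tA y" using poset_antisym[OF bounded_poset_poset[OF A]] tA that False by blast
      moreover have "k y \<in> B - {?tB}" using order_iso_mem[OF k] that(2) False by blast
      then have "\<not> le' ?tB (k y)" using poset_antisym[OF bounded_poset_poset[OF B]] tB by blast
      ultimately show ?thesis using True False k'_k that(2) unfolding k'_def by simp
    next
      case False
      then show ?thesis using order_iso_le[OF k] k'_k that \<open>y \<noteq> ?tA\<close> by simp
    qed
  qed
  then show ?thesis using bij unfolding iso_def by blast
qed

lemma iso_extend_pbot:
  assumes "bounded_poset A le" "bounded_poset B le'"
    and "iso (A - {pbot A le}) le (B - {pbot B le'}) le'"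
  shows "iso A le B le'"
proof -
  have "iso (A - {ptop A le\<inverse>\<inverse>}) le\<inverse>\<inverse> (B - {ptop B le'\<inverse>\<inverse>}) le'\<inverse>\<inverse>"
    using assms(3) unfolding pbot_conversep iso_iff_order_iso by simp
  then have "iso A le\<inverse>\<inverse> B le'\<inverse>\<inverse>" using iso_extend_ptop[of A "le\<inverse>\<inverse>" B "le'\<inverse>\<inverse>"] assms(1,2) by simp
  then show ?thesis unfolding iso_iff_order_iso by simp
qed

lemma order_iso_card_atoms:
  "order_iso h A le B le' \<Longrightarrow> bounded_poset A le \<Longrightarrow> card (atoms B le') = card (atoms A le)"
  using order_iso_atoms order_iso_inj atoms_subset card_image inj_on_subset by metis

lemma order_iso_card_coatoms:
  "order_iso h A le B le' \<Longrightarrow> bounded_poset A le \<Longrightarrow> card (coatoms B le') = card (coatoms A le)"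
  using order_iso_coatoms order_iso_inj coatoms_subset card_image inj_on_subset by metis

context vsum2_setting
begin

lemma iso_Sum_props:
  assumes "finite C" "is_lattice C lc" "iso C lc Sum sum_le"
  shows "card (atoms C lc) = card (atoms A le)" "card (coatoms C lc) = card (coatoms B le')"
    "\<exists>\<rho>. rank_fun C lc \<rho> \<and> \<rho> (ptop C lc) \<ge> 3" "card C = card A + card B - 4"
proof -
  obtain h where h: "order_iso h C lc Sum sum_le" using assms(3) iso_iff_order_iso by blast
  have C: "bounded_poset C lc" using finite_lattice_bounded_poset assms(1,2) .
  show "card (atoms C lc) = card (atoms A le)"
    using order_iso_card_atoms[OF h C] unfolding atoms_Sum by (simp add: card_image)
  show "card (coatoms C lc) = card (coatoms B le')"
    using order_iso_card_coatoms[OF h C] unfolding coatoms_Sum by (simp add: card_image)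
  have "(sum_rank \<circ> h) (ptop C lc) = \<rho>B tB + rA - 2"
    using order_iso_ptop[OF h C] sum_rank_ptop by simp
  then show "\<exists>\<rho>. rank_fun C lc \<rho> \<and> \<rho> (ptop C lc) \<ge> 3"
    using order_iso_rank_fun[OF h C rank_fun_Sum] rank_topA rank_topB by fastforce
  show "card C = card A + card B - 4" using order_iso_card[OF h] card_Sum by simp
qed

end

text \<open>The middle neck of the first sum is carried to a neck of the second one at the same rank;
  since \<open>A2\<close> has no neck, it cannot lie below the middle level of the second sum.\<close>

lemma vsum2_iso_rank_le:
  assumes V1: "vsum2_setting A1 le1 B1 le1' \<phi>1 \<rho>A1 \<rho>B1"
    and V2: "vsum2_setting A2 le2 B2 le2' \<phi>2 \<rho>A2 \<rho>B2"
    and no_neck: "\<not> (\<exists>a b. is_neck A2 le2 \<rho>A2 a b)"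
    and h: "order_iso h (fst (vsum2 A1 le1 B1 le1' \<phi>1)) (snd (vsum2 A1 le1 B1 le1' \<phi>1))
                       (fst (vsum2 A2 le2 B2 le2' \<phi>2)) (snd (vsum2 A2 le2 B2 le2' \<phi>2))"
  shows "\<rho>A2 (ptop A2 le2) \<le> \<rho>A1 (ptop A1 le1)"
proof -
  interpret V1: vsum2_setting A1 le1 B1 le1' \<phi>1 \<rho>A1 \<rho>B1 by (rule V1)
  interpret V2: vsum2_setting A2 le2 B2 le2' \<phi>2 \<rho>A2 \<rho>B2 by (rule V2)
  have h: "order_iso h V1.Sum V1.sum_le V2.Sum V2.sum_le" using h V1.vsum2_eq V2.vsum2_eq by simp
  have ranks: "\<forall>z\<in>V1.Sum. V1.sum_rank z = V2.sum_rank (h z)"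
    using order_iso_rank_eq[OF h V1.finite_Sum V1.bounded_poset_Sum V1.rank_fun_Sum V2.rank_fun_Sum] .
  obtain x y where neck: "is_neck V1.Sum V1.sum_le V1.sum_rank x y" and x: "V1.sum_rank x = V1.rA - 1"
    using V1.neck_at_middle by blast
  have "is_neck V1.Sum V1.sum_le (V2.sum_rank \<circ> h) x y"
    using is_neck_cong[OF _ neck] ranks by simp
  then have neck2: "is_neck V2.Sum V2.sum_le V2.sum_rank (h x) (h y)"
    using order_iso_neck[OF h V1.bounded_poset_Sum] by blast
  have "x \<in> V1.Sum" using neck unfolding is_neck_def by blast
  then have "V2.sum_rank (h x) = V1.rA - 1" using ranks x by simp
  moreover have "\<not> V2.sum_rank (h x) < V2.rA - 1" using V2.neck_below_middle[OF neck2] no_neck by blast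
  ultimately show ?thesis using V1.rank_topA V2.rank_topA by linarith
qed

lemma vsum2_unique_decomposition:
  assumes V1: "vsum2_setting A1 le1 B1 le1' \<phi>1 \<rho>A1 \<rho>B1"
    and V2: "vsum2_setting A2 le2 B2 le2' \<phi>2 \<rho>A2 \<rho>B2"
    and no_neck1: "\<not> (\<exists>a b. is_neck A1 le1 \<rho>A1 a b)"
    and no_neck2: "\<not> (\<exists>a b. is_neck A2 le2 \<rho>A2 a b)"
    and iso: "iso (fst (vsum2 A1 le1 B1 le1' \<phi>1)) (snd (vsum2 A1 le1 B1 le1' \<phi>1))
                  (fst (vsum2 A2 le2 B2 le2' \<phi>2)) (snd (vsum2 A2 le2 B2 le2' \<phi>2))"
  shows "iso A1 le1 A2 le2" "iso B1 le1' B2 le2'"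
proof -
  interpret V1: vsum2_setting A1 le1 B1 le1' \<phi>1 \<rho>A1 \<rho>B1 by (rule V1)
  interpret V2: vsum2_setting A2 le2 B2 le2' \<phi>2 \<rho>A2 \<rho>B2 by (rule V2)
  obtain h where h0: "order_iso h (fst (vsum2 A1 le1 B1 le1' \<phi>1)) (snd (vsum2 A1 le1 B1 le1' \<phi>1))
      (fst (vsum2 A2 le2 B2 le2' \<phi>2)) (snd (vsum2 A2 le2 B2 le2' \<phi>2))"
    using iso iso_iff_order_iso by blast
  have h: "order_iso h V1.Sum V1.sum_le V2.Sum V2.sum_le" using h0 V1.vsum2_eq V2.vsum2_eq by simp
  have "V1.rA = V2.rA"
    using vsum2_iso_rank_le[OF V1 V2 no_neck2 h0] vsum2_iso_rank_le[OF V2 V1 no_neck1]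
      order_iso_inv[OF h0] by fastforce
  moreover have ranks: "\<forall>z\<in>V1.Sum. V1.sum_rank z = V2.sum_rank (h z)"
    using order_iso_rank_eq[OF h V1.finite_Sum V1.bounded_poset_Sum V1.rank_fun_Sum V2.rank_fun_Sum] .
  ultimately have lower: "h ` Inl ` (A1 - {V1.tA}) = Inl ` (A2 - {V2.tA})"
    and upper: "h ` V1.up ` (B1 - {V1.bB}) = V2.up ` (B2 - {V2.bB})"
    using order_iso_image_level[OF h ranks, of "\<lambda>r. r \<le> V1.rA - 1"]
      order_iso_image_level[OF h ranks, of "\<lambda>r. r \<ge> V1.rA - 1"]
    unfolding V1.lower_part[symmetric] V2.lower_part[symmetric] V1.upper_part[symmetric]
      V2.upper_part[symmetric]
    by simp_all
  have "iso (A1 - {V1.tA}) le1 (A2 - {V2.tA}) le2"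
    using iso_of_corresponding_parts[OF h _ _ _ _ _ lower] V1.Inl_in_Sum V1.Inl_le_Inl_iff
      V2.Inl_le_Inl_iff by (simp add: image_subset_iff)
  then show "iso A1 le1 A2 le2"
    by (rule iso_extend_ptop[OF finite_lattice_bounded_poset[OF V1.finA V1.latA]
          finite_lattice_bounded_poset[OF V2.finA V2.latA]])
  have "inj_on V1.up X" "inj_on V2.up Y" for X Y
    using V1.up_inj V2.up_inj by (meson inj_onI)+
  then have "iso (B1 - {V1.bB}) le1' (B2 - {V2.bB}) le2'"
    using iso_of_corresponding_parts[OF h _ _ _ _ _ upper] V1.up_in_Sum V1.up_le_up_iff
      V2.up_le_up_iff by (simp add: image_subset_iff)
  then show "iso B1 le1' B2 le2'"
    by (rule iso_extend_pbot[OF finite_lattice_bounded_poset[OF V1.finB V1.latB]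
          finite_lattice_bounded_poset[OF V2.finB V2.latB]])
qed

lemma piece_not_iso_vsum2:
  assumes V: "vsum2_setting A le B le' \<phi> \<rho>A \<rho>B" and C: "finite C" "is_piece C lc"
  shows "\<not> iso C lc (fst (vsum2 A le B le' \<phi>)) (snd (vsum2 A le B le' \<phi>))"
proof
  interpret V: vsum2_setting A le B le' \<phi> \<rho>A \<rho>B by (rule V)
  assume "iso C lc (fst (vsum2 A le B le' \<phi>)) (snd (vsum2 A le B le' \<phi>))"
  then obtain h where "order_iso h C lc V.Sum V.sum_le" using iso_iff_order_iso V.vsum2_eq by metis
  then have k: "order_iso (inv_into C h) V.Sum V.sum_le C lc" by (rule order_iso_inv)
  obtain \<rho> where \<rho>: "rank_fun C lc \<rho>" and no_neck: "\<not> (\<exists>a b. is_neck C lc \<rho> a b)"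
    using C(2) unfolding is_piece_def by blast
  have ranks: "\<forall>z\<in>V.Sum. V.sum_rank z = \<rho> (inv_into C h z)"
    using order_iso_rank_eq[OF k V.finite_Sum V.bounded_poset_Sum V.rank_fun_Sum \<rho>] .
  obtain x y where neck: "is_neck V.Sum V.sum_le V.sum_rank x y" using V.neck_at_middle by blast
  have "is_neck V.Sum V.sum_le (\<rho> \<circ> inv_into C h) x y" using is_neck_cong[OF _ neck] ranks by simp
  then have "is_neck C lc \<rho> (inv_into C h x) (inv_into C h y)"
    using order_iso_neck[OF k V.bounded_poset_Sum] by blast
  with no_neck show False by blast
qed

section \<open>Counting isomorphism classes\<close>

type_synonym 'a ordered_set = "'a set \<times> ('a \<Rightarrow> 'a \<Rightarrow> bool)"

definition iso_class :: "'a ordered_set set \<Rightarrow> 'a ordered_set \<Rightarrow> 'a ordered_set set" where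
  "iso_class S C = {D \<in> S. iso (fst D) (snd D) (fst C) (snd C)}"

definition pairwise_noniso :: "'a ordered_set set \<Rightarrow> bool" where
  "pairwise_noniso T \<longleftrightarrow> (\<forall>x\<in>T. \<forall>y\<in>T. iso (fst x) (snd x) (fst y) (snd y) \<longrightarrow> x = y)"

lemma num_classes_eq: "num_classes S = card (iso_class S ` S)"
proof -
  have "(\<lambda>(A, le). {(B, le'). (B, le') \<in> S \<and> iso B le' A le}) = iso_class S"
    unfolding iso_class_def by (auto simp: fun_eq_iff)
  then show ?thesis unfolding num_classes_def by simp
qed

lemma iso_class_self: "C \<in> S \<Longrightarrow> C \<in> iso_class S C"
  unfolding iso_class_def using iso_refl by blast

lemma iso_class_eq_iff:
  assumes "C1 \<in> S" "C2 \<in> S"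
  shows "iso_class S C1 = iso_class S C2 \<longleftrightarrow> iso (fst C1) (snd C1) (fst C2) (snd C2)"
proof
  assume "iso_class S C1 = iso_class S C2"
  then show "iso (fst C1) (snd C1) (fst C2) (snd C2)"
    using iso_class_self[OF assms(1)] unfolding iso_class_def by blast
next
  assume i: "iso (fst C1) (snd C1) (fst C2) (snd C2)"
  show "iso_class S C1 = iso_class S C2"
    unfolding iso_class_def using iso_trans[OF _ i] iso_trans[OF _ iso_sym[OF i]] by blast
qed

text \<open>Every \<open>n\<close>-element ordered set is isomorphic to one on \<open>{..<n}\<close>, and there are only finitely
  many relations on \<open>{..<n}\<close>.\<close>

lemma finite_iso_classes:
  assumes "\<forall>C\<in>S. finite (fst C) \<and> card (fst C) = n"
  shows "finite (iso_class S ` S)"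
proof -
  define models where
    "models K = {R. R \<subseteq> {..<n} \<times> {..<n} \<and> (\<exists>D\<in>K. iso (fst D) (snd D) {..<n} (\<lambda>x y. (x, y) \<in> R))}"
    for K :: "'a ordered_set set"
  have models_nonempty: "models (iso_class S C) \<noteq> {}" if C: "C \<in> S" for C
  proof -
    obtain f where f: "bij_betw f (fst C) {..<n}"
      using ex_bij_betw_finite_nat[of "fst C"] assms C by (auto simp: atLeast0LessThan)
    define R where "R = {(f x, f y) | x y. x \<in> fst C \<and> y \<in> fst C \<and> snd C x y}"
    have "R \<subseteq> {..<n} \<times> {..<n}" unfolding R_def using f bij_betwE by fastforce
    moreover have "order_iso f (fst C) (snd C) {..<n} (\<lambda>x y. (x, y) \<in> R)"
      unfolding order_iso_def R_def using f bij_betw_imp_inj_on[OF f] by (auto dest: inj_onD)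
    ultimately have "R \<in> models (iso_class S C)"
      unfolding models_def using iso_class_self[OF C] iso_iff_order_iso by blast
    then show ?thesis by blast
  qed
  have "inj_on models (iso_class S ` S)"
  proof (rule inj_onI)
    fix K1 K2 assume K: "K1 \<in> iso_class S ` S" "K2 \<in> iso_class S ` S" "models K1 = models K2"
    then obtain C1 C2 where C: "C1 \<in> S" "C2 \<in> S" "K1 = iso_class S C1" "K2 = iso_class S C2" by blast
    then obtain R where "R \<in> models K1" "R \<in> models K2" using models_nonempty K(3) by blast
    then obtain D1 D2 where "D1 \<in> K1" "D2 \<in> K2"
      "iso (fst D1) (snd D1) {..<n} (\<lambda>x y. (x, y) \<in> R)" "iso (fst D2) (snd D2) {..<n} (\<lambda>x y. (x, y) \<in> R)"
      unfolding models_def by blast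
    with C have "iso (fst C1) (snd C1) (fst C2) (snd C2)"
      unfolding iso_class_def using iso_trans iso_sym by (metis (no_types, lifting) mem_Collect_eq)
    then show "K1 = K2" using iso_class_eq_iff C by blast
  qed
  moreover have "models ` (iso_class S ` S) \<subseteq> Pow (Pow ({..<n} \<times> {..<n}))" unfolding models_def by blast
  moreover have "finite (Pow (Pow ({..<n} \<times> {..<n})))" by simp
  ultimately show ?thesis by (meson finite_imageD finite_subset)
qed

lemma card_le_num_classes:
  assumes "T \<subseteq> S" "pairwise_noniso T" "finite (iso_class S ` S)"
  shows "card T \<le> num_classes S"
proof -
  have "inj_on (iso_class S) T"
  proof (rule inj_onI)
    fix x y assume "x \<in> T" "y \<in> T" "iso_class S x = iso_class S y"
    then have "iso (fst x) (snd x) (fst y) (snd y)" using iso_class_eq_iff assms(1) by blast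
    then show "x = y" using assms(2) \<open>x \<in> T\<close> \<open>y \<in> T\<close> unfolding pairwise_noniso_def by blast
  qed
  then have "card T = card (iso_class S ` T)" by (simp add: card_image)
  also have "\<dots> \<le> card (iso_class S ` S)" using card_mono[OF assms(3) image_mono[OF assms(1)]] .
  finally show ?thesis using num_classes_eq[of S] by simp
qed

lemma exists_class_representatives:
  assumes "finite (iso_class S ` S)"
  shows "\<exists>R \<subseteq> S. pairwise_noniso R \<and> finite R \<and> card R = num_classes S"
proof -
  define rep where "rep K = (SOME x. x \<in> K)" for K :: "'a ordered_set set"
  have rep: "rep (iso_class S C) \<in> iso_class S C" if "C \<in> S" for C
    unfolding rep_def using iso_class_self[OF that] by (metis someI_ex)
  then have rep_S: "rep (iso_class S C) \<in> S"
    and rep_iso: "iso (fst (rep (iso_class S C))) (snd (rep (iso_class S C))) (fst C) (snd C)"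
    if "C \<in> S" for C
    using that unfolding iso_class_def by blast+
  have rep_class: "iso_class S (rep K) = K" if "K \<in> iso_class S ` S" for K
    using that iso_class_eq_iff rep_S rep_iso by blast
  define R where "R = rep ` iso_class S ` S"
  have "inj_on rep (iso_class S ` S)"
  proof (rule inj_onI)
    fix K1 K2 assume "K1 \<in> iso_class S ` S" "K2 \<in> iso_class S ` S" "rep K1 = rep K2"
    then show "K1 = K2" using rep_class by metis
  qed
  then have "card R = num_classes S" unfolding R_def num_classes_eq by (simp add: card_image)
  moreover have "pairwise_noniso R"
    unfolding pairwise_noniso_def
  proof (intro ballI impI)
    fix x y assume "x \<in> R" "y \<in> R" "iso (fst x) (snd x) (fst y) (snd y)"
    then obtain C1 C2 where C: "C1 \<in> S" "C2 \<in> S" "x = rep (iso_class S C1)" "y = rep (iso_class S C2)"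
      unfolding R_def by blast
    with \<open>iso (fst x) (snd x) (fst y) (snd y)\<close> have "iso_class S x = iso_class S y"
      using iso_class_eq_iff rep_S by blast
    then show "x = y" using C rep_class by (metis imageI)
  qed
  moreover have "R \<subseteq> S" "finite R" unfolding R_def using rep_S assms by auto
  ultimately show ?thesis by blast
qed

lemma pairwise_noniso_Un:
  assumes "pairwise_noniso S" "pairwise_noniso T"
    and "\<forall>x\<in>S. \<forall>y\<in>T. \<not> iso (fst x) (snd x) (fst y) (snd y)"
  shows "pairwise_noniso (S \<union> T)"
  using assms iso_sym unfolding pairwise_noniso_def by (metis Un_iff)

lemma pairwise_noniso_UN:
  assumes "\<forall>i\<in>I. pairwise_noniso (G i)"
    and "\<forall>i\<in>I. \<forall>j\<in>I. \<forall>x\<in>G i. \<forall>y\<in>G j. iso (fst x) (snd x) (fst y) (snd y) \<longrightarrow> i = j"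
  shows "pairwise_noniso (\<Union>i\<in>I. G i)"
  using assms unfolding pairwise_noniso_def by (metis UN_E)

section \<open>Families closed under vertical 2-sum\<close>

declare lowf.simps [simp del]

lemma lowf_unfold:
  assumes "6 < n"
  shows "lowf p N n = (if n \<le> N then p n else 0) + (\<Sum>k = 6..min (n - 1) N. p k * lowf p N (n - k + 4))"
proof (cases "n \<le> N")
  case True
  then have "min (n - 1) N = n - 1" by simp
  then show ?thesis using assms True by (subst lowf.simps) simp
next
  case False
  then have "min (n - 1) N = N" by simp
  then show ?thesis using assms False by (subst lowf.simps) simp
qed

locale vsum2_closed_family =
  fixes F :: "nat ordered_set set"
  assumes members: "\<And>A le. (A, le) \<in> F \<Longrightarrow> finite A \<and> is_lattice A le \<and> graded A le \<and> vert_indec A le"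
    and closed: "closed_vsum2 F"
begin

definition gluable :: "nat ordered_set \<Rightarrow> bool" where
  "gluable C \<longleftrightarrow> C \<in> F \<and> card (atoms (fst C) (snd C)) = 2 \<and> card (coatoms (fst C) (snd C)) = 2
     \<and> (\<exists>\<rho>. rank_fun (fst C) (snd C) \<rho> \<and> \<rho> (ptop (fst C) (snd C)) \<ge> 3)"

definition piece_member :: "nat ordered_set \<Rightarrow> bool" where
  "piece_member C \<longleftrightarrow> C \<in> F \<and> is_piece (fst C) (snd C)"

definition members_of_size :: "nat \<Rightarrow> nat ordered_set set" where
  "members_of_size n = {C \<in> F. card (fst C) = n}"

definition pieces_of_size :: "nat \<Rightarrow> nat ordered_set set" where
  "pieces_of_size n = {C \<in> F. card (fst C) = n \<and> is_piece (fst C) (snd C)}"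

lemma f_vi_eq: "f_vi F n = num_classes (members_of_size n)"
  unfolding f_vi_def members_of_size_def by (simp add: case_prod_beta')

lemma f_pc_eq: "f_pc F n = num_classes (pieces_of_size n)"
  unfolding f_pc_def pieces_of_size_def by (simp add: case_prod_beta')

lemma member_finite_lattice: "C \<in> F \<Longrightarrow> finite (fst C) \<and> is_lattice (fst C) (snd C)"
  using members[of "fst C" "snd C"] by simp

lemma finite_iso_classes_of_size:
  "finite (iso_class (members_of_size n) ` members_of_size n)"
  "finite (iso_class (pieces_of_size n) ` pieces_of_size n)"
  by (rule finite_iso_classes[where n=n];
      auto simp: members_of_size_def pieces_of_size_def member_finite_lattice)+

lemma piece_member_gluable: "piece_member C \<Longrightarrow> gluable C"
  unfolding piece_member_def gluable_def is_piece_def by blast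

definition piece_rank :: "nat ordered_set \<Rightarrow> nat \<Rightarrow> nat" where
  "piece_rank C = (SOME \<rho>. rank_fun (fst C) (snd C) \<rho> \<and> \<rho> (ptop (fst C) (snd C)) \<ge> 3
      \<and> \<not> (\<exists>a b. is_neck (fst C) (snd C) \<rho> a b))"

definition gluable_rank :: "nat ordered_set \<Rightarrow> nat \<Rightarrow> nat" where
  "gluable_rank C = (SOME \<rho>. rank_fun (fst C) (snd C) \<rho> \<and> \<rho> (ptop (fst C) (snd C)) \<ge> 3)"

definition glue_map :: "nat ordered_set \<Rightarrow> nat ordered_set \<Rightarrow> nat \<Rightarrow> nat" where
  "glue_map P X = (SOME \<phi>. bij_betw \<phi> (coatoms (fst P) (snd P)) (atoms (fst X) (snd X)))"

lemma piece_rank: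
  assumes "piece_member C"
  shows "rank_fun (fst C) (snd C) (piece_rank C)" "piece_rank C (ptop (fst C) (snd C)) \<ge> 3"
    "\<not> (\<exists>a b. is_neck (fst C) (snd C) (piece_rank C) a b)"
proof -
  have "\<exists>\<rho>. rank_fun (fst C) (snd C) \<rho> \<and> \<rho> (ptop (fst C) (snd C)) \<ge> 3
      \<and> \<not> (\<exists>a b. is_neck (fst C) (snd C) \<rho> a b)"
    using assms unfolding piece_member_def is_piece_def by blast
  from someI_ex[OF this] show "rank_fun (fst C) (snd C) (piece_rank C)"
    "piece_rank C (ptop (fst C) (snd C)) \<ge> 3" "\<not> (\<exists>a b. is_neck (fst C) (snd C) (piece_rank C) a b)"
    unfolding piece_rank_def by blast+
qed

lemma gluable_rank:
  assumes "gluable C"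
  shows "rank_fun (fst C) (snd C) (gluable_rank C)" "gluable_rank C (ptop (fst C) (snd C)) \<ge> 3"
proof -
  have "\<exists>\<rho>. rank_fun (fst C) (snd C) \<rho> \<and> \<rho> (ptop (fst C) (snd C)) \<ge> 3"
    using assms unfolding gluable_def by blast
  from someI_ex[OF this] show "rank_fun (fst C) (snd C) (gluable_rank C)"
    "gluable_rank C (ptop (fst C) (snd C)) \<ge> 3"
    unfolding gluable_rank_def by blast+
qed

lemma glue_map:
  assumes "gluable P" "gluable X"
  shows "bij_betw (glue_map P X) (coatoms (fst P) (snd P)) (atoms (fst X) (snd X))"
proof -
  have "card (coatoms (fst P) (snd P)) = card (atoms (fst X) (snd X))"
    "finite (coatoms (fst P) (snd P))" "finite (atoms (fst X) (snd X))"
    using assms unfolding gluable_def by (auto intro: card_ge_0_finite)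
  then have "\<exists>\<phi>. bij_betw \<phi> (coatoms (fst P) (snd P)) (atoms (fst X) (snd X))"
    using finite_same_card_bij by blast
  then show ?thesis unfolding glue_map_def by (rule someI_ex)
qed

lemma vsum2_setting_glue:
  assumes P: "piece_member P" and X: "gluable X"
  shows "vsum2_setting (fst P) (snd P) (fst X) (snd X) (glue_map P X) (piece_rank P) (gluable_rank X)"
  using member_finite_lattice piece_rank[OF P] gluable_rank[OF X] glue_map[OF piece_member_gluable[OF P] X]
    piece_member_gluable[OF P] X
  unfolding vsum2_setting_def gluable_def by blast

definition glue :: "nat ordered_set \<Rightarrow> nat ordered_set \<Rightarrow> nat ordered_set" where
  "glue P X = (SOME C. C \<in> F \<and> iso (fst C) (snd C)
      (fst (vsum2 (fst P) (snd P) (fst X) (snd X) (glue_map P X)))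
      (snd (vsum2 (fst P) (snd P) (fst X) (snd X) (glue_map P X))))"

lemma glue:
  assumes "piece_member P" "gluable X"
  shows "glue P X \<in> F" "iso (fst (glue P X)) (snd (glue P X))
      (fst (vsum2 (fst P) (snd P) (fst X) (snd X) (glue_map P X)))
      (snd (vsum2 (fst P) (snd P) (fst X) (snd X) (glue_map P X)))"
proof -
  have "\<exists>C lc. (C, lc) \<in> F \<and> iso C lc (fst (vsum2 (fst P) (snd P) (fst X) (snd X) (glue_map P X)))
      (snd (vsum2 (fst P) (snd P) (fst X) (snd X) (glue_map P X)))"
    using closed glue_map[OF piece_member_gluable[OF assms(1)] assms(2)] assms
    unfolding closed_vsum2_def piece_member_def gluable_def is_piece_def by simp
  then have "\<exists>C. C \<in> F \<and> iso (fst C) (snd C)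
      (fst (vsum2 (fst P) (snd P) (fst X) (snd X) (glue_map P X)))
      (snd (vsum2 (fst P) (snd P) (fst X) (snd X) (glue_map P X)))" by auto
  from someI_ex[OF this] show "glue P X \<in> F" "iso (fst (glue P X)) (snd (glue P X))
      (fst (vsum2 (fst P) (snd P) (fst X) (snd X) (glue_map P X)))
      (snd (vsum2 (fst P) (snd P) (fst X) (snd X) (glue_map P X)))"
    unfolding glue_def by blast+
qed

lemma glue_gluable_card:
  assumes P: "piece_member P" and X: "gluable X"
  shows "gluable (glue P X)" "card (fst (glue P X)) = card (fst P) + card (fst X) - 4"
proof -
  interpret V: vsum2_setting "fst P" "snd P" "fst X" "snd X" "glue_map P X" "piece_rank P" "gluable_rank X"
    using vsum2_setting_glue[OF P X] .
  have C: "finite (fst (glue P X))" "is_lattice (fst (glue P X)) (snd (glue P X))"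
    using member_finite_lattice[OF glue(1)[OF P X]] by auto
  have iso: "iso (fst (glue P X)) (snd (glue P X)) V.Sum V.sum_le" using glue(2)[OF P X] V.vsum2_eq by simp
  show "gluable (glue P X)"
    using V.iso_Sum_props[OF C iso] glue(1)[OF P X] piece_member_gluable[OF P] X
    unfolding gluable_def by auto
  show "card (fst (glue P X)) = card (fst P) + card (fst X) - 4"
    using V.iso_Sum_props[OF C iso] by blast
qed

lemma piece_not_iso_glue:
  assumes "piece_member Q" "piece_member P" "gluable X"
  shows "\<not> iso (fst Q) (snd Q) (fst (glue P X)) (snd (glue P X))"
proof
  assume "iso (fst Q) (snd Q) (fst (glue P X)) (snd (glue P X))"
  from iso_trans[OF this glue(2)[OF assms(2,3)]]
  show False
    using piece_not_iso_vsum2[OF vsum2_setting_glue[OF assms(2,3)]] member_finite_lattice assms(1)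
    unfolding piece_member_def by blast
qed

lemma iso_glue_imp_iso:
  assumes "piece_member P1" "gluable X1" "piece_member P2" "gluable X2"
    and "iso (fst (glue P1 X1)) (snd (glue P1 X1)) (fst (glue P2 X2)) (snd (glue P2 X2))"
  shows "iso (fst P1) (snd P1) (fst P2) (snd P2)" "iso (fst X1) (snd X1) (fst X2) (snd X2)"
  using vsum2_unique_decomposition[OF vsum2_setting_glue[OF assms(1,2)] vsum2_setting_glue[OF assms(3,4)]
      piece_rank(3)[OF assms(1)] piece_rank(3)[OF assms(3)]]
    iso_trans[OF iso_trans[OF iso_sym[OF glue(2)[OF assms(1,2)]] assms(5)] glue(2)[OF assms(3,4)]]
  by blast+

definition piece_reps :: "nat \<Rightarrow> nat ordered_set set" where
  "piece_reps k = (SOME R. R \<subseteq> pieces_of_size k \<and> pairwise_noniso R \<and> finite R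
      \<and> card R = num_classes (pieces_of_size k))"

lemma piece_reps:
  "piece_reps k \<subseteq> pieces_of_size k" "pairwise_noniso (piece_reps k)" "finite (piece_reps k)"
  "card (piece_reps k) = f_pc F k"
proof -
  have "\<exists>R. R \<subseteq> pieces_of_size k \<and> pairwise_noniso R \<and> finite R \<and> card R = num_classes (pieces_of_size k)"
    using exists_class_representatives[OF finite_iso_classes_of_size(2)] by blast
  from someI_ex[OF this]
  show "piece_reps k \<subseteq> pieces_of_size k" "pairwise_noniso (piece_reps k)" "finite (piece_reps k)"
    "card (piece_reps k) = f_pc F k"
    unfolding piece_reps_def f_pc_eq by blast+
qed

lemma piece_reps_member: "P \<in> piece_reps k \<Longrightarrow> piece_member P \<and> card (fst P) = k"
  using piece_reps(1) unfolding pieces_of_size_def piece_member_def by blast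

definition glued :: "nat \<Rightarrow> nat ordered_set set \<Rightarrow> nat ordered_set set" where
  "glued k T = (\<lambda>(P, X). glue P X) ` (piece_reps k \<times> T)"

lemma gluedE:
  assumes "C \<in> glued k T"
  obtains P X where "P \<in> piece_reps k" "X \<in> T" "C = glue P X"
  using assms unfolding glued_def by auto

lemma finite_glued: "finite T \<Longrightarrow> finite (glued k T)"
  unfolding glued_def using piece_reps(3) by simp

lemma glued_member:
  assumes "C \<in> glued k T" "T \<subseteq> members_of_size m" "\<forall>X\<in>T. gluable X"
  shows "gluable C" "C \<in> members_of_size (k + m - 4)"
proof -
  obtain P X where PX: "P \<in> piece_reps k" "X \<in> T" "C = glue P X"
    using assms(1) by (rule gluedE)
  then have P: "piece_member P" "card (fst P) = k" and X: "gluable X" "card (fst X) = m"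
    using piece_reps_member assms(2,3) unfolding members_of_size_def by auto
  show "gluable C" using glue_gluable_card(1)[OF P(1) X(1)] PX(3) by simp
  then show "C \<in> members_of_size (k + m - 4)"
    using glue_gluable_card(2)[OF P(1) X(1)] P(2) X(2) PX(3)
    unfolding members_of_size_def gluable_def by simp
qed

lemma glued_iso_same_piece_size:
  assumes "C1 \<in> glued k1 T1" "C2 \<in> glued k2 T2" "\<forall>X\<in>T1 \<union> T2. gluable X"
    and "iso (fst C1) (snd C1) (fst C2) (snd C2)"
  shows "k1 = k2"
proof -
  obtain P1 X1 P2 X2 where "P1 \<in> piece_reps k1" "X1 \<in> T1" "C1 = glue P1 X1"
    "P2 \<in> piece_reps k2" "X2 \<in> T2" "C2 = glue P2 X2"
    using assms(1,2) by (metis gluedE)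
  then show ?thesis
    using iso_glue_imp_iso(1) assms(3,4) piece_reps_member iso_card by (metis Un_iff)
qed

lemma glue_eq_of_iso:
  assumes T: "pairwise_noniso T" "\<forall>X\<in>T. gluable X"
    and "P1 \<in> piece_reps k" "X1 \<in> T" "P2 \<in> piece_reps k" "X2 \<in> T"
    and "iso (fst (glue P1 X1)) (snd (glue P1 X1)) (fst (glue P2 X2)) (snd (glue P2 X2))"
  shows "P1 = P2" "X1 = X2"
proof -
  have "iso (fst P1) (snd P1) (fst P2) (snd P2)" "iso (fst X1) (snd X1) (fst X2) (snd X2)"
    using iso_glue_imp_iso[OF _ _ _ _ assms(7)] assms(3-6) T(2) piece_reps_member by blast+
  then show "P1 = P2" "X1 = X2"
    using piece_reps(2)[of k] T(1) assms(3-6) unfolding pairwise_noniso_def by blast+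
qed

lemma pairwise_noniso_glued:
  assumes "pairwise_noniso T" "\<forall>X\<in>T. gluable X"
  shows "pairwise_noniso (glued k T)"
  unfolding pairwise_noniso_def
proof (intro ballI impI)
  fix C1 C2 assume "C1 \<in> glued k T" "C2 \<in> glued k T"
    and iso: "iso (fst C1) (snd C1) (fst C2) (snd C2)"
  then obtain P1 X1 P2 X2 where "P1 \<in> piece_reps k" "X1 \<in> T" "C1 = glue P1 X1"
    "P2 \<in> piece_reps k" "X2 \<in> T" "C2 = glue P2 X2"
    by (metis gluedE)
  with glue_eq_of_iso[OF assms] iso show "C1 = C2" by metis
qed

lemma card_glued:
  assumes "finite T" "pairwise_noniso T" "\<forall>X\<in>T. gluable X"
  shows "card (glued k T) = f_pc F k * card T"
proof -
  have "inj_on (\<lambda>(P, X). glue P X) (piece_reps k \<times> T)"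
    unfolding inj_on_def
  proof clarify
    fix P1 X1 P2 X2
    assume "P1 \<in> piece_reps k" "X1 \<in> T" "P2 \<in> piece_reps k" "X2 \<in> T" "glue P1 X1 = glue P2 X2"
    then show "P1 = P2 \<and> X1 = X2" using glue_eq_of_iso[OF assms(2,3)] iso_refl by metis
  qed
  then have "card (glued k T) = card (piece_reps k \<times> T)" unfolding glued_def by (rule card_image)
  also have "\<dots> = card (piece_reps k) * card T" by (rule card_cartesian_product)
  finally show ?thesis using piece_reps(4) by simp
qed

lemma glued_family:
  assumes "finite K" "\<forall>k\<in>K. finite (W k) \<and> pairwise_noniso (W k) \<and> (\<forall>X\<in>W k. gluable X)"
  shows "pairwise_noniso (\<Union>k\<in>K. glued k (W k))"
    "card (\<Union>k\<in>K. glued k (W k)) = (\<Sum>k\<in>K. f_pc F k * card (W k))"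
proof -
  have same: "k1 = k2" if "k1 \<in> K" "k2 \<in> K" "C1 \<in> glued k1 (W k1)" "C2 \<in> glued k2 (W k2)"
    "iso (fst C1) (snd C1) (fst C2) (snd C2)" for k1 k2 C1 C2
  proof -
    have "\<forall>X\<in>W k1 \<union> W k2. gluable X" using assms(2) that(1,2) by blast
    from glued_iso_same_piece_size[OF that(3,4) this that(5)] show ?thesis .
  qed
  show "pairwise_noniso (\<Union>k\<in>K. glued k (W k))"
  proof (rule pairwise_noniso_UN)
    show "\<forall>k\<in>K. pairwise_noniso (glued k (W k))" using pairwise_noniso_glued assms(2) by blast
    show "\<forall>i\<in>K. \<forall>j\<in>K. \<forall>x\<in>glued i (W i). \<forall>y\<in>glued j (W j).
        iso (fst x) (snd x) (fst y) (snd y) \<longrightarrow> i = j"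
      using same by blast
  qed
  have "\<forall>k\<in>K. finite (glued k (W k))" using finite_glued assms(2) by blast
  moreover have "\<forall>i\<in>K. \<forall>j\<in>K. i \<noteq> j \<longrightarrow> glued i (W i) \<inter> glued j (W j) = {}"
    using same iso_refl by blast
  ultimately have "card (\<Union>k\<in>K. glued k (W k)) = (\<Sum>k\<in>K. card (glued k (W k)))"
    by (rule card_UN_disjoint[OF assms(1)])
  then show "card (\<Union>k\<in>K. glued k (W k)) = (\<Sum>k\<in>K. f_pc F k * card (W k))"
    using card_glued assms(2) by simp
qed

definition lower_bound_witness :: "nat \<Rightarrow> nat \<Rightarrow> nat ordered_set set \<Rightarrow> bool" where
  "lower_bound_witness N n T \<longleftrightarrow> finite T \<and> T \<subseteq> members_of_size n \<and> (\<forall>X\<in>T. gluable X)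
     \<and> pairwise_noniso T \<and> lowf (f_pc F) N n \<le> card T"

lemma piece_reps_witness: "n \<le> 6 \<Longrightarrow> lower_bound_witness N n (piece_reps n)"
  unfolding lower_bound_witness_def members_of_size_def
  using piece_reps piece_reps_member piece_member_gluable lowf.simps[of _ N n]
  unfolding piece_member_def by auto

lemma glued_witness:
  assumes W: "\<And>k. k \<in> {6..min (n - 1) N} \<Longrightarrow> lower_bound_witness N (n - k + 4) (W k)"
  defines "G \<equiv> \<Union>k\<in>{6..min (n - 1) N}. glued k (W k)"
  shows "finite G" "G \<subseteq> members_of_size n" "\<forall>C\<in>G. gluable C" "pairwise_noniso G"
    "(\<Sum>k = 6..min (n - 1) N. f_pc F k * lowf (f_pc F) N (n - k + 4)) \<le> card G"
proof -
  let ?K = "{6..min (n - 1) N}"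
  have W': "\<forall>k\<in>?K. finite (W k) \<and> pairwise_noniso (W k) \<and> (\<forall>X\<in>W k. gluable X)"
    using W unfolding lower_bound_witness_def by blast
  show "finite G" "pairwise_noniso G" using finite_glued W' glued_family(1)[OF _ W']
    unfolding G_def by auto
  have "C \<in> members_of_size n \<and> gluable C" if "k \<in> ?K" "C \<in> glued k (W k)" for k C
  proof -
    have "W k \<subseteq> members_of_size (n - k + 4)" "\<forall>X\<in>W k. gluable X"
      using W[OF that(1)] unfolding lower_bound_witness_def by blast+
    moreover have "k + (n - k + 4) - 4 = n" using that(1) by auto
    ultimately show ?thesis using glued_member[OF that(2)] by metis
  qed
  then show "G \<subseteq> members_of_size n" "\<forall>C\<in>G. gluable C" unfolding G_def by blast+
  have "lowf (f_pc F) N (n - k + 4) \<le> card (W k)" if "k \<in> ?K" for k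
    using W[OF that] unfolding lower_bound_witness_def by blast
  then have "(\<Sum>k\<in>?K. f_pc F k * lowf (f_pc F) N (n - k + 4)) \<le> (\<Sum>k\<in>?K. f_pc F k * card (W k))"
    by (intro sum_mono mult_le_mono2)
  also have "\<dots> = card G" unfolding G_def using glued_family(2)[OF _ W'] by simp
  finally show "(\<Sum>k\<in>?K. f_pc F k * lowf (f_pc F) N (n - k + 4)) \<le> card G" .
qed

lemma piece_rep_not_iso_glued:
  assumes "Q \<in> piece_reps n" "C \<in> glued k T" "\<forall>X\<in>T. gluable X"
  shows "\<not> iso (fst Q) (snd Q) (fst C) (snd C)"
  using assms(2)
proof (cases rule: gluedE)
  case (1 P X)
  then show ?thesis using piece_not_iso_glue piece_reps_member assms(1,3) by blast
qed

text \<open>For \<open>n > 6\<close> the witness consists of the representatives of the \<open>n\<close>-element pieces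
  (if \<open>n \<le> N\<close>) together with the sums \<open>P +\<^sub>2 X\<close> of a representative piece \<open>P\<close> of size \<open>k\<close>
  and a member \<open>X\<close> of the witness for \<open>n - k + 4\<close>.\<close>

lemma lower_bound_witness_step:
  assumes "6 < n" and IH: "\<forall>m<n. lower_bound_witness N m (W m)"
  shows "\<exists>T. lower_bound_witness N n T"
proof -
  define T0 where "T0 = (if n \<le> N then piece_reps n else {})"
  define G where "G = (\<Union>k\<in>{6..min (n - 1) N}. glued k (W (n - k + 4)))"
  have W: "lower_bound_witness N (n - k + 4) (W (n - k + 4))" if "k \<in> {6..min (n - 1) N}" for k
    using IH that by auto
  note G = glued_witness[where W = "\<lambda>k. W (n - k + 4)", OF W, folded G_def]
  have T0: "T0 \<subseteq> members_of_size n" "\<forall>Q\<in>T0. gluable Q" "finite T0" "pairwise_noniso T0"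
    "card T0 = (if n \<le> N then f_pc F n else 0)"
    unfolding T0_def members_of_size_def using piece_reps piece_reps_member piece_member_gluable
    by (auto simp: pairwise_noniso_def piece_member_def)
  have disjoint: "\<forall>Q\<in>T0. \<forall>C\<in>G. \<not> iso (fst Q) (snd Q) (fst C) (snd C)"
  proof (intro ballI)
    fix Q C assume "Q \<in> T0" "C \<in> G"
    then have "Q \<in> piece_reps n" unfolding T0_def by (simp split: if_splits)
    obtain k where "k \<in> {6..min (n - 1) N}" "C \<in> glued k (W (n - k + 4))"
      using \<open>C \<in> G\<close> unfolding G_def by blast
    then show "\<not> iso (fst Q) (snd Q) (fst C) (snd C)"
      using piece_rep_not_iso_glued[OF \<open>Q \<in> piece_reps n\<close>] W unfolding lower_bound_witness_def by blast
  qed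
  have "lowf (f_pc F) N n \<le> card T0 + card G"
    unfolding lowf_unfold[OF assms(1)] T0(5) using G(5) by simp
  also have "card T0 + card G = card (T0 \<union> G)"
    using card_Un_disjoint[OF T0(3) G(1)] disjoint iso_refl by (metis disjoint_iff)
  finally have "lower_bound_witness N n (T0 \<union> G)"
    unfolding lower_bound_witness_def using T0(1-4) G(1-4) pairwise_noniso_Un[OF T0(4) G(4) disjoint]
    by auto
  then show ?thesis by blast
qed

lemma lower_bound_witness_exists: "\<exists>T. lower_bound_witness N n T"
proof (induction n rule: less_induct)
  case (less n)
  show ?case
  proof (cases "n \<le> 6")
    case True
    then show ?thesis using piece_reps_witness by blast
  next
    case False
    from less obtain W where "\<forall>m<n. lower_bound_witness N m (W m)" by metis
    then show ?thesis using lower_bound_witness_step False by simp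
  qed
qed

lemma lowf_le_f_vi: "lowf (f_pc F) N n \<le> f_vi F n"
proof -
  obtain T where "lower_bound_witness N n T" using lower_bound_witness_exists by blast
  then show ?thesis
    using card_le_num_classes[OF _ _ finite_iso_classes_of_size(1)] f_vi_eq
    unfolding lower_bound_witness_def by fastforce
qed

end

theorem theorem3p7:
  fixes F :: "(nat set \<times> (nat \<Rightarrow> nat \<Rightarrow> bool)) set" and N :: nat
  assumes members: "\<And>A le. (A, le) \<in> F \<Longrightarrow>
            finite A \<and> is_lattice A le \<and> graded A le \<and> vert_indec A le"
    and closed: "closed_vsum2 F"
    and N: "N \<ge> 6"
  shows "\<forall>n \<ge> 1. f_vi F n \<ge> lowf (f_pc F) N n"
proof -
  interpret vsum2_closed_family F using members closed by unfold_locales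
  \<comment> \<open>The bound holds for every \<open>N\<close>.\<close>
  show ?thesis using lowf_le_f_vi by blast
qed

end
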